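(* Let $Z$ be a sufficiently saturated model of the complete theory of $(\mathbb{Z},+,<)$ (possibly expanded), containing $\mathbb{Z}$ as elementary substructure. Let $D$ be a $0$-definable set, $X$ a profinite topological space, and $\{C_d\}_{d\in D}$, $C_d\subseteq Z^r$, a $0$-definable family of bounded sets. Put $C=\bigcup_{d\in D}C_d\times\{d\}$. For each $d\in D$ let $Y_d\subseteq X\times C_d$ be a nonempty semigroup (with some product), and put $Y=\bigcup_d Y_d\times\{d\}\subseteq X\times C$, with the fiberwise product $Y\times_D Y\to Y$. Assume: (1) $Y$ is $0$-relatively definable in $X\times C$; (2) the product $Y\times_D Y\to Y$ is a $0$-pro-definable map. Then for every $d\in D$, $Y_d$ has an idempotent.
   Context: "$0$-definable" means definable without parameters. A set $C_d$ is bounded if $C_d\subseteq[-c,c]^r$ for some $c\in Z$. The profinite space $X$ is viewed as a $0$-pro-definable set as follows: for each finite partition $U$ of $X$ into clopen sets, $X/U$ denotes the finite set $U$ (finite sets are treated as $0$-definable sets, using the two $0$-definable constants $0,1$), and $\pi_U:X\times C\to X/U\times C$ sends $(x,c)$ to $(R,c)$ where $x\in R\in U$. $Y\subseteq X\times C$ is $0$-relatively definable if there are a finite clopen partition $U_0$ and a $0$-definable $F_0\subseteq X/U_0\times C$ with $Y=\pi_{U_0}^{-1}(F_0)$. The product $Y\times_DY\to Y$ (defined on pairs in the same fiber $Y_d$) is a $0$-pro-definable map if for every finite clopen partition $U$ there exist a finite clopen partition $V$ refining $U$ and a $0$-definable map $m_{V,U}:(X/V\times C)\times_D(X/V\times C)\to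 X/U\times C$ with $\pi_U(y\cdot y')=m_{V,U}(\pi_V(y),\pi_V(y'))$ for all $y,y'$ in a common $Y_d$. An idempotent of $Y_d$ is an element $e$ with $e\cdot e=e$. *)

theory Defs
  imports "HOL-Analysis.Analysis"
begin

text \<open>Terms and formulas over an arbitrary language: function symbols of type 'f and
relation symbols of type 'r (each symbol may be applied to argument lists of any length;
this just amounts to an arbitrary, possibly large, language).\<close>

datatype 'f trm = Var nat | Fn 'f "'f trm list"

datatype ('f, 'r) fm =
    Eq "'f trm" "'f trm"
  | Rel 'r "'f trm list"
  | Neg "('f, 'r) fm"
  | Conj "('f, 'r) fm" "('f, 'r) fm"
  | Ex nat "('f, 'r) fm"

text \<open>A structure on the whole type 'a: interpretation of function and relation symbols.\<close>
type_synonym ('f, 'r, 'a) struc = "('f \<Rightarrow> 'a list \<Rightarrow> 'a) \<times> ('r \<Rightarrow> 'a list \<Rightarrow> bool)"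

fun evalt :: "('f, 'r, 'a) struc \<Rightarrow> (nat \<Rightarrow> 'a) \<Rightarrow> 'f trm \<Rightarrow> 'a" where
  "evalt M s (Var i) = s i"
| "evalt M s (Fn f ts) = fst M f (map (evalt M s) ts)"

fun sat :: "('f, 'r, 'a) struc \<Rightarrow> ('f, 'r) fm \<Rightarrow> (nat \<Rightarrow> 'a) \<Rightarrow> bool" where
  "sat M (Eq t u) s = (evalt M s t = evalt M s u)"
| "sat M (Rel R ts) s = snd M R (map (evalt M s) ts)"
| "sat M (Neg \<phi>) s = (\<not> sat M \<phi> s)"
| "sat M (Conj \<phi> \<psi>) s = (sat M \<phi> s \<and> sat M \<psi> s)"
| "sat M (Ex i \<phi>) s = (\<exists>a. sat M \<phi> (s(i := a)))"

definition elem_emb :: "('f, 'r, 'a) struc \<Rightarrow> ('f, 'r, 'b) struc \<Rightarrow> ('a \<Rightarrow> 'b) \<Rightarrow> bool" where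
  "elem_emb M N j \<longleftrightarrow> inj j \<and> (\<forall>\<phi> s. sat M \<phi> s \<longleftrightarrow> sat N \<phi> (j \<circ> s))"

text \<open>Saturation: every finitely satisfiable 1-type over a parameter set A of cardinality
at most |B| is realised (i.e. the structure is |B|^+-saturated).  A type is a set of
formulas with assignments taking values in A; variable 0 is the free variable.\<close>
definition realises :: "('f, 'r, 'a) struc \<Rightarrow> (('f, 'r) fm \<times> (nat \<Rightarrow> 'a)) set \<Rightarrow> 'a \<Rightarrow> bool" where
  "realises M \<Sigma> b \<longleftrightarrow> (\<forall>(\<phi>, s) \<in> \<Sigma>. sat M \<phi> (s(0 := b)))"

definition saturated_for :: "('f, 'r, 'a) struc \<Rightarrow> 'b set \<Rightarrow> bool" where
  "saturated_for M B \<longleftrightarrow>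
     (\<forall>A :: 'a set. (\<exists>g. inj_on g A \<and> g ` A \<subseteq> B) \<longrightarrow>
       (\<forall>\<Sigma>. (\<forall>(\<phi>, s) \<in> \<Sigma>. range s \<subseteq> A) \<longrightarrow>
             (\<forall>F. finite F \<and> F \<subseteq> \<Sigma> \<longrightarrow> (\<exists>b. realises M F b)) \<longrightarrow>
             (\<exists>b. realises M \<Sigma> b)))"

definition def0 :: "('f, 'r, 'a) struc \<Rightarrow> nat \<Rightarrow> 'a list set \<Rightarrow> bool" where
  "def0 M n S \<longleftrightarrow> (\<exists>\<phi>. S = {xs. length xs = n \<and> (\<forall>s. (\<forall>i<n. s i = xs ! i) \<longrightarrow> sat M \<phi> s)})"

definition bounded_in :: "('f, 'r, 'a) struc \<Rightarrow> 'f \<Rightarrow> 'f \<Rightarrow> 'r \<Rightarrow> nat \<Rightarrow> 'a list set \<Rightarrow> bool" where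
  "bounded_in M plusS zeroS lessS r C \<longleftrightarrow>
     (let le = (\<lambda>a b. snd M lessS [a, b] \<or> a = b);
          z = fst M zeroS [];
          neg = (\<lambda>c. THE e. fst M plusS [e, c] = z)
      in \<exists>c. \<forall>xs \<in> C. length xs = r \<and> (\<forall>i<r. le (neg c) (xs ! i) \<and> le (xs ! i) c))"

definition totally_disconnected_space :: "'x topology \<Rightarrow> bool" where
  "totally_disconnected_space X \<longleftrightarrow> (\<forall>S. connectedin X S \<longrightarrow> S = {} \<or> (\<exists>a. S = {a}))"

definition profinite_space :: "'x topology \<Rightarrow> bool" where
  "profinite_space X \<longleftrightarrow> compact_space X \<and> Hausdorff_space X \<and> totally_disconnected_space X"

definition clopen_partition :: "'x topology \<Rightarrow> 'x set set \<Rightarrow> bool" where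
  "clopen_partition X U \<longleftrightarrow> finite U \<and> (\<forall>R\<in>U. openin X R \<and> closedin X R \<and> R \<noteq> {})
     \<and> (\<forall>R\<in>U. \<forall>S\<in>U. R \<noteq> S \<longrightarrow> R \<inter> S = {}) \<and> \<Union>U = topspace X"

definition refines :: "'x set set \<Rightarrow> 'x set set \<Rightarrow> bool" where
  "refines V U \<longleftrightarrow> (\<forall>R\<in>V. \<exists>S\<in>U. R \<subseteq> S)"

definition blk :: "'x set set \<Rightarrow> 'x \<Rightarrow> 'x set" where
  "blk U x = (THE R. R \<in> U \<and> x \<in> R)"

end

theory Submission
  imports Defs
begin

text \<open>For a standard parameter \<open>d\<close> the fibre \<open>C\<^sub>d\<close> is finite, because the bound of a
  definable bounded family can be taken in \<open>\<int>\<close> and an elementary extension adds no points to a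
  finite definable set. Then \<open>Y\<^sub>d\<close> is a compact semigroup in its profinite topology with
  continuous right multiplications, and the Ellis--Numakura argument gives an idempotent.

  For a clopen partition \<open>U\<close>, ``some element of \<open>Y\<^sub>d\<close> is idempotent modulo \<open>U\<close>'' is a
  first-order property of \<open>d\<close>. It holds for every \<open>d\<close> in \<open>\<int>\<close>, hence, by elementarity, for
  every \<open>d\<close> in \<open>Z\<close>. Compactness of \<open>X\<close> yields one \<open>x\<close> that works modulo all finite families of
  partitions simultaneously, and saturation a matching \<open>c\<close>; \<open>(x, c)\<close> is then idempotent
  modulo every partition, hence idempotent.\<close>

section \<open>Formulas: free variables, renaming and derived connectives\<close>

fun trm_vars :: "'f trm \<Rightarrow> nat set" where
  "trm_vars (Var i) = {i}"
| "trm_vars (Fn f ts) = (\<Union>t\<in>set ts. trm_vars t)"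

fun fm_vars :: "('f, 'r) fm \<Rightarrow> nat set" where
  "fm_vars (Eq t u) = trm_vars t \<union> trm_vars u"
| "fm_vars (Rel R ts) = (\<Union>t\<in>set ts. trm_vars t)"
| "fm_vars (Neg \<phi>) = fm_vars \<phi>"
| "fm_vars (Conj \<phi> \<psi>) = fm_vars \<phi> \<union> fm_vars \<psi>"
| "fm_vars (Ex i \<phi>) = insert i (fm_vars \<phi>)"

lemma finite_trm_vars: "finite (trm_vars t)"
  by (induction t) auto

lemma finite_fm_vars: "finite (fm_vars \<phi>)"
  by (induction \<phi>) (auto simp: finite_trm_vars)

lemma evalt_cong: "(\<And>i. i \<in> trm_vars t \<Longrightarrow> s i = s' i) \<Longrightarrow> evalt M s t = evalt M s' t"
proof (induction t)
  case (Fn f ts)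
  then have "map (evalt M s) ts = map (evalt M s') ts"
    by (auto simp: map_eq_conv)
  then show ?case by (simp del: map_eq_conv)
qed simp

lemma sat_cong: "(\<And>i. i \<in> fm_vars \<phi> \<Longrightarrow> s i = s' i) \<Longrightarrow> sat M \<phi> s = sat M \<phi> s'"
proof (induction \<phi> arbitrary: s s')
  case (Rel R ts)
  then have "map (evalt M s) ts = map (evalt M s') ts"
    by (auto simp: map_eq_conv intro!: evalt_cong)
  then show ?case by (simp del: map_eq_conv)
next
  case (Ex i \<phi>)
  then have "sat M \<phi> (s(i := a)) = sat M \<phi> (s'(i := a))" for a
    by (intro Ex.IH) auto
  then show ?case by simp
next
  case (Eq t u)
  have "evalt M s t = evalt M s' t" "evalt M s u = evalt M s' u"
    by (rule evalt_cong; use Eq in simp)+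
  then show ?case by simp
next
  case (Neg \<phi>)
  have "sat M \<phi> s = sat M \<phi> s'"
    by (rule Neg.IH) (use Neg.prems in simp)
  then show ?case by simp
next
  case (Conj \<phi> \<psi>)
  have "sat M \<phi> s = sat M \<phi> s'" "sat M \<psi> s = sat M \<psi> s'"
    by (rule Conj.IH; use Conj.prems in simp)+
  then show ?case by simp
qed

fun rename_trm :: "(nat \<Rightarrow> nat) \<Rightarrow> 'f trm \<Rightarrow> 'f trm" where
  "rename_trm \<sigma> (Var i) = Var (\<sigma> i)"
| "rename_trm \<sigma> (Fn f ts) = Fn f (map (rename_trm \<sigma>) ts)"

fun rename_fm :: "(nat \<Rightarrow> nat) \<Rightarrow> ('f, 'r) fm \<Rightarrow> ('f, 'r) fm" where
  "rename_fm \<sigma> (Eq t u) = Eq (rename_trm \<sigma> t) (rename_trm \<sigma> u)"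
| "rename_fm \<sigma> (Rel R ts) = Rel R (map (rename_trm \<sigma>) ts)"
| "rename_fm \<sigma> (Neg \<phi>) = Neg (rename_fm \<sigma> \<phi>)"
| "rename_fm \<sigma> (Conj \<phi> \<psi>) = Conj (rename_fm \<sigma> \<phi>) (rename_fm \<sigma> \<psi>)"
| "rename_fm \<sigma> (Ex i \<phi>) = Ex (\<sigma> i) (rename_fm \<sigma> \<phi>)"

lemma evalt_rename_trm: "evalt M s (rename_trm \<sigma> t) = evalt M (s \<circ> \<sigma>) t"
  by (induction t) (auto cong: map_cong)

lemma sat_rename_fm: "inj \<sigma> \<Longrightarrow> sat M (rename_fm \<sigma> \<phi>) s = sat M \<phi> (s \<circ> \<sigma>)"
proof (induction \<phi> arbitrary: s)
  case (Ex i \<phi>)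
  have upd: "(s(\<sigma> i := a)) \<circ> \<sigma> = (s \<circ> \<sigma>)(i := a)" for a
    using Ex.prems by (auto simp: fun_eq_iff inj_eq)
  show ?case
    by (simp only: rename_fm.simps sat.simps Ex.IH[OF Ex.prems] upd)
qed (auto simp: evalt_rename_trm comp_def cong: map_cong)

fun Exs :: "nat list \<Rightarrow> ('f, 'r) fm \<Rightarrow> ('f, 'r) fm" where
  "Exs [] \<phi> = \<phi>"
| "Exs (v # vs) \<phi> = Ex v (Exs vs \<phi>)"

lemma sat_Exs: "sat M (Exs vs \<phi>) s \<longleftrightarrow> (\<exists>s'. (\<forall>i. i \<notin> set vs \<longrightarrow> s' i = s i) \<and> sat M \<phi> s')"
proof (induction vs arbitrary: s)
  case Nil
  have "s' = s" if "\<forall>i. s' i = s i" for s'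
    using that by (simp add: fun_eq_iff)
  then show ?case by auto
next
  case (Cons v vs)
  show ?case
  proof
    assume "sat M (Exs (v # vs) \<phi>) s"
    then obtain a s' where s': "\<forall>i. i \<notin> set vs \<longrightarrow> s' i = (s(v := a)) i" "sat M \<phi> s'"
      using Cons.IH by auto
    from s'(1) have "\<forall>i. i \<notin> set (v # vs) \<longrightarrow> s' i = s i"
      by simp
    with s'(2) show "\<exists>s'. (\<forall>i. i \<notin> set (v # vs) \<longrightarrow> s' i = s i) \<and> sat M \<phi> s'"
      by blast
  next
    assume "\<exists>s'. (\<forall>i. i \<notin> set (v # vs) \<longrightarrow> s' i = s i) \<and> sat M \<phi> s'"
    then obtain s' where s': "\<forall>i. i \<notin> set (v # vs) \<longrightarrow> s' i = s i" "sat M \<phi> s'" by blast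
    have "\<forall>i. i \<notin> set vs \<longrightarrow> s' i = (s(v := s' v)) i"
    proof (intro allI impI)
      fix i assume "i \<notin> set vs"
      with s'(1) show "s' i = (s(v := s' v)) i" by (cases "i = v") auto
    qed
    with s'(2) have "sat M (Exs vs \<phi>) (s(v := s' v))"
      unfolding Cons.IH by blast
    then show "sat M (Exs (v # vs) \<phi>) s"
      by (simp only: Exs.simps sat.simps) blast
  qed
qed

definition Alls :: "nat list \<Rightarrow> ('f, 'r) fm \<Rightarrow> ('f, 'r) fm" where
  "Alls vs \<phi> = Neg (Exs vs (Neg \<phi>))"

lemma sat_Alls: "sat M (Alls vs \<phi>) s \<longleftrightarrow> (\<forall>s'. (\<forall>i. i \<notin> set vs \<longrightarrow> s' i = s i) \<longrightarrow> sat M \<phi> s')"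
  by (auto simp: Alls_def sat_Exs)

definition Or :: "('f, 'r) fm \<Rightarrow> ('f, 'r) fm \<Rightarrow> ('f, 'r) fm" where
  "Or \<phi> \<psi> = Neg (Conj (Neg \<phi>) (Neg \<psi>))"

definition Imp :: "('f, 'r) fm \<Rightarrow> ('f, 'r) fm \<Rightarrow> ('f, 'r) fm" where
  "Imp \<phi> \<psi> = Neg (Conj \<phi> (Neg \<psi>))"

definition TT :: "('f, 'r) fm" where
  "TT = Eq (Var 0) (Var 0)"

definition Disj :: "('f, 'r) fm list \<Rightarrow> ('f, 'r) fm" where
  "Disj \<phi>s = foldr Or \<phi>s (Neg TT)"

definition Conjs :: "('f, 'r) fm list \<Rightarrow> ('f, 'r) fm" where
  "Conjs \<phi>s = foldr Conj \<phi>s TT"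

lemma sat_Or [simp]: "sat M (Or \<phi> \<psi>) s \<longleftrightarrow> sat M \<phi> s \<or> sat M \<psi> s"
  by (simp add: Or_def)

lemma sat_Imp [simp]: "sat M (Imp \<phi> \<psi>) s \<longleftrightarrow> (sat M \<phi> s \<longrightarrow> sat M \<psi> s)"
  by (simp add: Imp_def)

lemma sat_Disj [simp]: "sat M (Disj \<phi>s) s \<longleftrightarrow> (\<exists>\<phi>\<in>set \<phi>s. sat M \<phi> s)"
  by (induction \<phi>s) (auto simp: Disj_def TT_def)

lemma sat_Conjs [simp]: "sat M (Conjs \<phi>s) s \<longleftrightarrow> (\<forall>\<phi>\<in>set \<phi>s. sat M \<phi> s)"
  by (induction \<phi>s) (auto simp: Conjs_def TT_def)

section \<open>Definable sets and elementary embeddings\<close>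

lemma sat_Alls_rename_shift:
  assumes "fm_vars \<phi> \<subseteq> {..<N}" "n \<le> N"
  shows "sat M (Alls [K + n..<K + N] (rename_fm ((+) K) \<phi>)) t \<longleftrightarrow>
    (\<forall>s. (\<forall>i<n. s i = t (K + i)) \<longrightarrow> sat M \<phi> s)"
proof -
  have inj: "inj ((+) K)" by simp
  show ?thesis
    unfolding sat_Alls sat_rename_fm[OF inj]
  proof (intro iffI allI impI)
    fix s assume H: "\<forall>t'. (\<forall>i. i \<notin> set [K + n..<K + N] \<longrightarrow> t' i = t i) \<longrightarrow> sat M \<phi> (t' \<circ> (+) K)"
      and s: "\<forall>i<n. s i = t (K + i)"
    define t' where "t' v = (if K + n \<le> v \<and> v < K + N then s (v - K) else t v)" for v
    have "sat M \<phi> (t' \<circ> (+) K)"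
      using H by (auto simp: t'_def)
    moreover have "(t' \<circ> (+) K) i = s i" if "i \<in> fm_vars \<phi>" for i
      using that assms s by (auto simp: t'_def)
    ultimately show "sat M \<phi> s"
      using sat_cong by metis
  next
    fix t' assume H: "\<forall>s. (\<forall>i<n. s i = t (K + i)) \<longrightarrow> sat M \<phi> s"
      and t': "\<forall>i. i \<notin> set [K + n..<K + N] \<longrightarrow> t' i = t i"
    show "sat M \<phi> (t' \<circ> (+) K)"
      using H t' by simp
  qed
qed

lemma def0_formula:
  assumes "def0 M (length ts) S"
  shows "\<exists>\<psi>. \<forall>t. sat M \<psi> t \<longleftrightarrow> map t ts \<in> S"
proof -
  define n where "n = length ts"
  obtain \<phi> where S: "S = {xs. length xs = n \<and> (\<forall>s. (\<forall>i<n. s i = xs ! i) \<longrightarrow> sat M \<phi> s)}"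
    using assms unfolding def0_def n_def by blast
  define K where "K = Suc (Max (insert 0 (set ts)))"
  define N where "N = Suc (Max (insert n (fm_vars \<phi>)))"
  have ts_K: "ts ! i < K" if "i < n" for i
    using that finite_fm_vars unfolding K_def n_def by (simp add: le_imp_less_Suc)
  have "x \<le> Max (insert n (fm_vars \<phi>))" if "x \<in> insert n (fm_vars \<phi>)" for x
    using that finite_fm_vars[of \<phi>] by (intro Max_ge) simp_all
  then have N: "fm_vars \<phi> \<subseteq> {..<N}" "n \<le> N"
    unfolding N_def by (auto simp: le_imp_less_Suc le_SucI)
  \<comment> \<open>Copy the tuple into the fresh variables \<open>K, \<dots>, K + n - 1\<close> and evaluate the shifted \<open>\<phi>\<close> there.\<close>
  define \<psi> where "\<psi> = Exs [K..<K + n]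
    (Conj (Conjs (map (\<lambda>i. Eq (Var (K + i)) (Var (ts ! i))) [0..<n]))
          (Alls [K + n..<K + N] (rename_fm ((+) K) \<phi>)))"
  have "sat M \<psi> t \<longleftrightarrow> (\<forall>s. (\<forall>i<n. s i = t (ts ! i)) \<longrightarrow> sat M \<phi> s)" for t
  proof
    assume "sat M \<psi> t"
    then obtain t' where t': "\<forall>v. v \<notin> set [K..<K + n] \<longrightarrow> t' v = t v"
      "\<forall>i<n. t' (K + i) = t' (ts ! i)" "\<forall>s. (\<forall>i<n. s i = t' (K + i)) \<longrightarrow> sat M \<phi> s"
      unfolding \<psi>_def sat_Exs sat.simps(4) sat_Alls_rename_shift[OF N] by auto
    have "t' (K + i) = t (ts ! i)" if "i < n" for i
      using t'(1,2) ts_K[OF that] that by simp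
    with t'(3) show "\<forall>s. (\<forall>i<n. s i = t (ts ! i)) \<longrightarrow> sat M \<phi> s"
      by simp
  next
    assume H: "\<forall>s. (\<forall>i<n. s i = t (ts ! i)) \<longrightarrow> sat M \<phi> s"
    define t' where "t' v = (if K \<le> v \<and> v < K + n then t (ts ! (v - K)) else t v)" for v
    have "t' (K + i) = t' (ts ! i)" if "i < n" for i
      using ts_K[OF that] that by (simp add: t'_def)
    then show "sat M \<psi> t"
      unfolding \<psi>_def sat_Exs sat.simps(4) sat_Alls_rename_shift[OF N]
      using H by (intro exI[of _ t']) (auto simp: t'_def)
  qed
  then have "sat M \<psi> t \<longleftrightarrow> map t ts \<in> S" for t
    unfolding S n_def by simp
  then show ?thesis by blast
qed

definition fm_of :: "('f, 'r, 'a) struc \<Rightarrow> 'a list set \<Rightarrow> nat list \<Rightarrow> ('f, 'r) fm" where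
  "fm_of M S ts = (SOME \<psi>. \<forall>t. sat M \<psi> t \<longleftrightarrow> map t ts \<in> S)"

lemma sat_fm_of:
  assumes "def0 M (length ts) S"
  shows "sat M (fm_of M S ts) t \<longleftrightarrow> map t ts \<in> S"
  using someI_ex[OF def0_formula[OF assms]] unfolding fm_of_def by blast

lemma sat_override_above:
  "\<forall>v\<in>fm_vars \<phi>. v < b \<Longrightarrow> sat M \<phi> (\<lambda>v. if b \<le> v then f v else t v) = sat M \<phi> t"
  by (rule sat_cong) auto

definition values_among :: "nat list \<Rightarrow> nat \<Rightarrow> nat \<Rightarrow> ('f, 'r) fm \<Rightarrow> ('f, 'r) fm" where
  "values_among vs b n \<phi> =
     Alls vs (Imp \<phi> (Conjs (map (\<lambda>i. Disj (map (\<lambda>k. Eq (Var i) (Var (b + k))) [0..<n])) vs)))"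

lemma sat_values_among:
  assumes named: "\<forall>k<length as. s (b + k) = as ! k" and vs: "\<forall>v\<in>set vs. v < b"
  shows "sat M (values_among vs b (length as) \<phi>) s \<longleftrightarrow>
    (\<forall>t. (\<forall>v. v \<notin> set vs \<longrightarrow> t v = s v) \<longrightarrow> sat M \<phi> t \<longrightarrow> (\<forall>i\<in>set vs. t i \<in> set as))"
proof -
  have "(\<exists>k\<in>{0..<length as}. t i = t (b + k)) \<longleftrightarrow> t i \<in> set as"
    if "\<forall>v. v \<notin> set vs \<longrightarrow> t v = s v" for t i
  proof -
    have "t (b + k) = as ! k" if "k < length as" for k
      using named vs that \<open>\<forall>v. v \<notin> set vs \<longrightarrow> t v = s v\<close> by (metis add_diff_cancel_left' diff_less_mono2
          le_add1 less_irrefl_nat not_add_less1)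
    then show ?thesis
      by (force simp: in_set_conv_nth)
  qed
  then show ?thesis
    unfolding values_among_def sat_Alls by auto
qed

lemma elem_emb_finite_values:
  assumes emb: "elem_emb N M j" and A: "finite A"
    and bound: "\<And>t. \<forall>v. v \<notin> set vs \<longrightarrow> t v = s v \<Longrightarrow> sat N \<phi> t \<Longrightarrow> \<forall>i\<in>set vs. t i \<in> A"
    and t: "\<forall>v. v \<notin> set vs \<longrightarrow> t v = j (s v)" "sat M \<phi> t" and i: "i \<in> set vs"
  shows "t i \<in> j ` A"
proof -
  obtain as where as: "set as = A"
    using finite_list[OF A] by blast
  define b where "b = Suc (Max (insert 0 (fm_vars \<phi> \<union> set vs)))"
  have fresh: "\<forall>v\<in>fm_vars \<phi>. v < b" "\<forall>v\<in>set vs. v < b"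
    using finite_fm_vars[of \<phi>] unfolding b_def by (simp_all add: le_imp_less_Suc)
  \<comment> \<open>Name the elements of \<open>A\<close> by the fresh variables \<open>b, b + 1, \<dots>\<close>; then ``every solution
    takes values among them'' is first order and transfers along \<open>j\<close>.\<close>
  define s' where "s' v = (if b \<le> v then (if v < b + length as then as ! (v - b) else s v) else s v)" for v
  have named: "\<forall>k<length as. s' (b + k) = as ! k"
    by (simp add: s'_def)
  have "sat N (values_among vs b (length as) \<phi>) s'"
    unfolding sat_values_among[OF named fresh(2)]
  proof (intro allI impI ballI)
    fix t' i assume t': "\<forall>v. v \<notin> set vs \<longrightarrow> t' v = s' v" and "sat N \<phi> t'" and i: "i \<in> set vs"
    then have "sat N \<phi> (\<lambda>v. if b \<le> v then s v else t' v)"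
      using sat_override_above[OF fresh(1)] by blast
    moreover have "\<forall>v. v \<notin> set vs \<longrightarrow> (if b \<le> v then s v else t' v) = s v"
      using t' unfolding s'_def by auto
    ultimately show "t' i \<in> set as"
      using bound[of "\<lambda>v. if b \<le> v then s v else t' v"] i fresh(2) as by fastforce
  qed
  then have "sat M (values_among vs b (length (map j as)) \<phi>) (j \<circ> s')"
    using emb unfolding elem_emb_def by simp
  moreover define t' where "t' v = (if b \<le> v then j (s' v) else t v)" for v
  moreover have "\<forall>v. v \<notin> set vs \<longrightarrow> t' v = (j \<circ> s') v"
    using t(1) unfolding t'_def s'_def by auto
  moreover have "sat M \<phi> t'"
    using t(2) unfolding t'_def sat_override_above[OF fresh(1)] .
  moreover have "\<forall>k<length (map j as). (j \<circ> s') (b + k) = map j as ! k"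
    using named by simp
  ultimately have "t' i \<in> set (map j as)"
    using i sat_values_among[OF _ fresh(2)] by blast
  then show ?thesis
    using as fresh(2) i unfolding t'_def by auto
qed

section \<open>Realising types over finitely many parameters\<close>

lemma finite_inj_into_infinite:
  assumes "infinite B" "finite A"
  shows "\<exists>g. inj_on g A \<and> g ` A \<subseteq> B"
proof -
  obtain B' where B': "finite B'" "card B' = card A" "B' \<subseteq> B"
    using infinite_arbitrarily_large[OF assms(1)] by blast
  then obtain g where "bij_betw g A B'"
    using finite_same_card_bij[OF assms(2) B'(1)] B'(2) by metis
  with B'(3) show ?thesis
    by (auto simp: bij_betw_def)
qed

lemma saturated_realise_one:
  assumes sat: "saturated_for M B" and B: "infinite B" and fin: "finite (range s)"
    and fs: "\<And>F. finite F \<Longrightarrow> F \<subseteq> \<Phi> \<Longrightarrow> \<exists>a. \<forall>\<phi>\<in>F. sat M \<phi> (s(v := a))"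
  shows "\<exists>a. \<forall>\<phi>\<in>\<Phi>. sat M \<phi> (s(v := a))"
proof -
  \<comment> \<open>Types are realised in variable 0, so swap 0 and \<open>v\<close>.\<close>
  define \<sigma> where "\<sigma> i = (if i = 0 then v else if i = v then 0 else i)" for i
  have \<sigma>\<sigma>: "\<sigma> (\<sigma> i) = i" for i
    unfolding \<sigma>_def by auto
  then have inj: "inj \<sigma>"
    by (metis injI)
  have \<sigma>0: "\<sigma> i = 0 \<longleftrightarrow> i = v" for i
    unfolding \<sigma>_def by auto
  have upd: "((s \<circ> \<sigma>)(0 := a)) \<circ> \<sigma> = s(v := a)" for a
    by (auto simp: fun_eq_iff \<sigma>0 \<sigma>\<sigma>)
  define \<Sigma> where "\<Sigma> = (\<lambda>\<phi>. (rename_fm \<sigma> \<phi>, s \<circ> \<sigma>)) ` \<Phi>"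
  have realises_iff: "realises M ((\<lambda>\<phi>. (rename_fm \<sigma> \<phi>, s \<circ> \<sigma>)) ` F) a \<longleftrightarrow> (\<forall>\<phi>\<in>F. sat M \<phi> (s(v := a)))" for F a
    by (simp add: realises_def sat_rename_fm[OF inj] upd)
  obtain g where "inj_on g (range s)" "g ` range s \<subseteq> B"
    using finite_inj_into_infinite[OF B fin] by blast
  moreover have "\<forall>(\<phi>, s')\<in>\<Sigma>. range s' \<subseteq> range s"
    unfolding \<Sigma>_def by auto
  moreover have "\<exists>a. realises M F a" if F: "finite F" "F \<subseteq> \<Sigma>" for F
  proof -
    obtain F' where "F' \<subseteq> \<Phi>" "finite F'" "F = (\<lambda>\<phi>. (rename_fm \<sigma> \<phi>, s \<circ> \<sigma>)) ` F'"
      using finite_subset_image[OF F[unfolded \<Sigma>_def]] by blast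
    then show ?thesis
      using fs[of F'] realises_iff[of F'] by blast
  qed
  ultimately obtain a where "realises M \<Sigma> a"
    using sat unfolding saturated_for_def by meson
  then show ?thesis
    using realises_iff unfolding \<Sigma>_def by blast
qed

lemma saturated_realise_head:
  assumes sat: "saturated_for M B" and B: "infinite B" and fin: "finite (range s)"
    and fs: "\<And>F. finite F \<Longrightarrow> F \<subseteq> \<Phi> \<Longrightarrow>
      \<exists>t. (\<forall>i. i \<notin> set (v # vs) \<longrightarrow> t i = s i) \<and> (\<forall>\<phi>\<in>F. sat M \<phi> t)"
  obtains a where "\<And>F. finite F \<Longrightarrow> F \<subseteq> \<Phi> \<Longrightarrow>
    \<exists>t. (\<forall>i. i \<notin> set vs \<longrightarrow> t i = (s(v := a)) i) \<and> (\<forall>\<phi>\<in>F. sat M \<phi> t)"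
proof -
  \<comment> \<open>Realise \<open>v\<close> in all finite conjunctions from \<open>\<Phi>\<close>, with the variables \<open>vs\<close> bound.\<close>
  have "\<exists>a. \<forall>\<theta>\<in>{Exs vs (Conjs Fl) | Fl. set Fl \<subseteq> \<Phi>}. sat M \<theta> (s(v := a))"
  proof (rule saturated_realise_one[OF sat B fin])
    fix F assume F: "finite F" "F \<subseteq> {Exs vs (Conjs Fl) | Fl. set Fl \<subseteq> \<Phi>}"
    then have "\<forall>\<theta>\<in>F. \<exists>Fl. set Fl \<subseteq> \<Phi> \<and> \<theta> = Exs vs (Conjs Fl)"
      by blast
    then obtain L where L: "\<forall>\<theta>\<in>F. set (L \<theta>) \<subseteq> \<Phi> \<and> \<theta> = Exs vs (Conjs (L \<theta>))"
      by metis
    obtain t where t: "\<forall>i. i \<notin> set (v # vs) \<longrightarrow> t i = s i" "\<forall>\<phi>\<in>(\<Union>\<theta>\<in>F. set (L \<theta>)). sat M \<phi> t"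
      using fs[of "\<Union>\<theta>\<in>F. set (L \<theta>)"] F(1) L by auto
    have agree: "\<forall>i. i \<notin> set vs \<longrightarrow> t i = (s(v := t v)) i"
      using t(1) by auto
    have "sat M \<theta> (s(v := t v))" if "\<theta> \<in> F" for \<theta>
    proof -
      have "sat M (Conjs (L \<theta>)) t"
        using t(2) that by auto
      then have "sat M (Exs vs (Conjs (L \<theta>))) (s(v := t v))"
        unfolding sat_Exs using agree by blast
      then show ?thesis
        using L that by metis
    qed
    then show "\<exists>a. \<forall>\<theta>\<in>F. sat M \<theta> (s(v := a))"
      by blast
  qed
  then obtain a where a: "sat M (Exs vs (Conjs Fl)) (s(v := a))" if "set Fl \<subseteq> \<Phi>" for Fl
    by blast
  have "\<exists>t. (\<forall>i. i \<notin> set vs \<longrightarrow> t i = (s(v := a)) i) \<and> (\<forall>\<phi>\<in>F. sat M \<phi> t)"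
    if F: "finite F" "F \<subseteq> \<Phi>" for F
  proof -
    obtain Fl where "set Fl = F"
      using finite_list[OF F(1)] by blast
    with a[of Fl] F show ?thesis
      by (auto simp: sat_Exs)
  qed
  then show ?thesis
    by (rule that)
qed

lemma saturated_realise:
  assumes sat: "saturated_for M B" and B: "infinite B" and fin: "finite (range s)"
    and fs: "\<And>F. finite F \<Longrightarrow> F \<subseteq> \<Phi> \<Longrightarrow>
      \<exists>t. (\<forall>i. i \<notin> set vs \<longrightarrow> t i = s i) \<and> (\<forall>\<phi>\<in>F. sat M \<phi> t)"
  shows "\<exists>t. (\<forall>i. i \<notin> set vs \<longrightarrow> t i = s i) \<and> (\<forall>\<phi>\<in>\<Phi>. sat M \<phi> t)"
  using fin fs
proof (induction vs arbitrary: s)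
  case Nil
  have "sat M \<phi> s" if "\<phi> \<in> \<Phi>" for \<phi>
  proof -
    obtain t where "\<forall>i. t i = s i" "sat M \<phi> t"
      using Nil.prems(2)[of "{\<phi>}"] \<open>\<phi> \<in> \<Phi>\<close> by auto
    moreover from this(1) have "t = s"
      by (simp add: fun_eq_iff)
    ultimately show ?thesis by simp
  qed
  then show ?case by auto
next
  case (Cons v vs)
  obtain a where a: "\<And>F. finite F \<Longrightarrow> F \<subseteq> \<Phi> \<Longrightarrow>
      \<exists>t. (\<forall>i. i \<notin> set vs \<longrightarrow> t i = (s(v := a)) i) \<and> (\<forall>\<phi>\<in>F. sat M \<phi> t)"
    using saturated_realise_head[OF sat B Cons.prems] by blast
  have "range (s(v := a)) \<subseteq> insert a (range s)"
    by auto
  then have "finite (range (s(v := a)))"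
    using Cons.prems(1) by (simp add: finite_subset)
  then obtain t where t: "\<forall>i. i \<notin> set vs \<longrightarrow> t i = (s(v := a)) i" "\<forall>\<phi>\<in>\<Phi>. sat M \<phi> t"
    using Cons.IH[OF _ a] by blast
  then show ?case
    by (intro exI[of _ t]) auto
qed

section \<open>Idempotents in compact semigroups\<close>

lemma subset_Zorn_Inter:
  assumes "\<A> \<noteq> {}" and ch: "\<And>\<C>. \<C> \<noteq> {} \<Longrightarrow> subset.chain \<A> \<C> \<Longrightarrow> \<Inter>\<C> \<in> \<A>"
  shows "\<exists>M\<in>\<A>. \<forall>X\<in>\<A>. X \<subseteq> M \<longrightarrow> X = M"
proof -
  have "\<exists>M\<in>uminus ` \<A>. \<forall>X\<in>uminus ` \<A>. M \<subseteq> X \<longrightarrow> X = M"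
  proof (rule subset_Zorn_nonempty)
    fix \<C> assume \<C>: "\<C> \<noteq> {}" "subset.chain (uminus ` \<A>) \<C>"
    then have "uminus ` \<C> \<subseteq> \<A>"
      unfolding subset_chain_def by auto
    moreover have "X \<subseteq> Y \<or> Y \<subseteq> X" if XY: "X \<in> uminus ` \<C>" "Y \<in> uminus ` \<C>" for X Y
    proof -
      obtain C1 C2 where C: "C1 \<in> \<C>" "C2 \<in> \<C>" "X = - C1" "Y = - C2"
        using XY by blast
      then have "C1 \<subseteq> C2 \<or> C2 \<subseteq> C1"
        using \<C>(2) unfolding subset_chain_def by blast
      with C(3,4) show ?thesis
        by (simp add: Compl_subset_Compl_iff disj_commute)
    qed
    ultimately have "subset.chain \<A> (uminus ` \<C>)"
      unfolding subset_chain_def by (intro conjI ballI) assumption+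
    with \<C>(1) have "\<Inter>(uminus ` \<C>) \<in> \<A>"
      by (intro ch) simp_all
    moreover have "\<Union>\<C> = - \<Inter>(uminus ` \<C>)"
      by auto
    ultimately show "\<Union>\<C> \<in> uminus ` \<A>"
      by blast
  qed (use assms(1) in simp)
  then obtain M where "M \<in> \<A>" "\<forall>X\<in>\<A>. - M \<subseteq> - X \<longrightarrow> - X = - M"
    by (auto dest!: bex_imageD)
  then show ?thesis
    by (metis Compl_subset_Compl_iff double_compl)
qed

lemma minimal_closed_subsemigroup:
  fixes S :: "'b set" and mul :: "'b \<Rightarrow> 'b \<Rightarrow> 'b" and cl :: "'b set \<Rightarrow> bool"
  assumes ne: "S \<noteq> {}" and cl_S: "cl S" and cl_sub: "\<And>K. cl K \<Longrightarrow> K \<subseteq> S"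
    and cl_Inter: "\<And>\<K>. \<K> \<noteq> {} \<Longrightarrow> \<forall>K\<in>\<K>. cl K \<Longrightarrow> cl (\<Inter>\<K>)"
    and compact: "\<And>\<K>. \<forall>K\<in>\<K>. cl K \<Longrightarrow> \<forall>F. finite F \<and> F \<subseteq> \<K> \<longrightarrow> \<Inter>F \<inter> S \<noteq> {} \<Longrightarrow> \<Inter>\<K> \<inter> S \<noteq> {}"
    and mul_closed: "\<And>x y. x \<in> S \<Longrightarrow> y \<in> S \<Longrightarrow> mul x y \<in> S"
  defines "\<A> \<equiv> {A. cl A \<and> A \<noteq> {} \<and> (\<forall>x\<in>A. \<forall>y\<in>A. mul x y \<in> A)}"
  shows "\<exists>A0\<in>\<A>. \<forall>A\<in>\<A>. A \<subseteq> A0 \<longrightarrow> A = A0"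
proof (rule subset_Zorn_Inter)
  show "\<A> \<noteq> {}"
    using ne cl_S mul_closed unfolding \<A>_def by blast
  fix \<C> assume \<C>: "\<C> \<noteq> {}" "subset.chain \<A> \<C>"
  then have cl_\<C>: "\<forall>K\<in>\<C>. cl K"
    unfolding subset_chain_def \<A>_def by blast
  have "\<Inter>F \<inter> S \<noteq> {}" if F: "finite F" "F \<subseteq> \<C>" for F
  proof (cases "F = {}")
    case False
    \<comment> \<open>A finite subchain has a least element.\<close>
    have "subset.chain \<A> F"
      using F(2) \<C>(2) unfolding subset_chain_def by (meson subset_trans subsetD)
    then have "\<Inter>F \<in> F"
      using Inter_in_chain F(1) False by blast
    with F(2) \<C>(2) have "\<Inter>F \<in> \<A>"
      unfolding subset_chain_def by blast
    then show ?thesis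
      using cl_sub unfolding \<A>_def by blast
  qed (use ne in simp)
  then have "\<Inter>\<C> \<noteq> {}"
    using compact[OF cl_\<C>] by blast
  then show "\<Inter>\<C> \<in> \<A>"
    using cl_Inter[OF \<C>(1) cl_\<C>] \<C>(2) unfolding \<A>_def subset_chain_def by blast
qed

lemma Ellis_Numakura:
  fixes S :: "'b set" and mul :: "'b \<Rightarrow> 'b \<Rightarrow> 'b" and cl :: "'b set \<Rightarrow> bool"
  assumes ne: "S \<noteq> {}" and cl_S: "cl S" and cl_sub: "\<And>K. cl K \<Longrightarrow> K \<subseteq> S"
    and cl_Inter: "\<And>\<K>. \<K> \<noteq> {} \<Longrightarrow> \<forall>K\<in>\<K>. cl K \<Longrightarrow> cl (\<Inter>\<K>)"
    and compact: "\<And>\<K>. \<forall>K\<in>\<K>. cl K \<Longrightarrow> \<forall>F. finite F \<and> F \<subseteq> \<K> \<longrightarrow> \<Inter>F \<inter> S \<noteq> {} \<Longrightarrow> \<Inter>\<K> \<inter> S \<noteq> {}"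
    and mul_closed: "\<And>x y. x \<in> S \<Longrightarrow> y \<in> S \<Longrightarrow> mul x y \<in> S"
    and assoc: "\<And>x y z. x \<in> S \<Longrightarrow> y \<in> S \<Longrightarrow> z \<in> S \<Longrightarrow> mul (mul x y) z = mul x (mul y z)"
    and cl_mul_right: "\<And>K a. cl K \<Longrightarrow> a \<in> S \<Longrightarrow> cl ((\<lambda>k. mul k a) ` K)"
    and cl_fixes: "\<And>a. a \<in> S \<Longrightarrow> cl {x\<in>S. mul x a = a}"
  shows "\<exists>e\<in>S. mul e e = e"
proof -
  define \<A> where "\<A> = {A. cl A \<and> A \<noteq> {} \<and> (\<forall>x\<in>A. \<forall>y\<in>A. mul x y \<in> A)}"
  have "\<exists>A0\<in>\<A>. \<forall>A\<in>\<A>. A \<subseteq> A0 \<longrightarrow> A = A0"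
    unfolding \<A>_def by (rule minimal_closed_subsemigroup) (fact assms)+
  then obtain A0 where "A0 \<in> \<A>" and minimal: "\<And>A. A \<in> \<A> \<Longrightarrow> A \<subseteq> A0 \<Longrightarrow> A = A0"
    by blast
  then have A0: "cl A0" "A0 \<noteq> {}" "\<forall>x\<in>A0. \<forall>y\<in>A0. mul x y \<in> A0"
    unfolding \<A>_def by blast+
  have A0_S: "A0 \<subseteq> S"
    using cl_sub[OF A0(1)] .
  obtain a where a: "a \<in> A0"
    using A0(2) by blast
  with A0_S have a_S: "a \<in> S" by blast
  \<comment> \<open>By minimality, \<open>A0 a = A0\<close>; so \<open>a\<close> is fixed by some element, and then by all of \<open>A0\<close>.\<close>
  have "(\<lambda>k. mul k a) ` A0 \<in> \<A>"
    unfolding \<A>_def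
  proof (intro CollectI conjI ballI)
    fix x y assume "x \<in> (\<lambda>k. mul k a) ` A0" "y \<in> (\<lambda>k. mul k a) ` A0"
    then obtain x' y' where xy: "x' \<in> A0" "y' \<in> A0" "x = mul x' a" "y = mul y' a"
      by blast
    with A0_S a_S have "mul x y = mul (mul (mul x' a) y') a"
      using mul_closed assoc by (simp add: subset_iff)
    moreover have "mul (mul x' a) y' \<in> A0"
      using xy(1,2) a A0(3) by blast
    ultimately show "mul x y \<in> (\<lambda>k. mul k a) ` A0"
      by blast
  qed (use cl_mul_right[OF A0(1) a_S] A0(2) in auto)
  moreover have "(\<lambda>k. mul k a) ` A0 \<subseteq> A0"
    using A0(3) a by blast
  ultimately have "(\<lambda>k. mul k a) ` A0 = A0"
    by (rule minimal)
  with a obtain x where x: "x \<in> A0" "mul x a = a"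
    by (metis imageE)
  define T where "T = A0 \<inter> {x\<in>S. mul x a = a}"
  have "T \<in> \<A>"
    unfolding \<A>_def
  proof (intro CollectI conjI ballI)
    show "cl T"
      using cl_Inter[of "{A0, {x\<in>S. mul x a = a}}"] A0(1) cl_fixes[OF a_S] unfolding T_def by auto
    show "T \<noteq> {}"
      using x A0_S unfolding T_def by blast
    fix y z assume "y \<in> T" "z \<in> T"
    with A0_S a_S assoc A0(3) show "mul y z \<in> T"
      unfolding T_def by (simp add: subset_iff)
  qed
  then have "T = A0"
    by (rule minimal) (simp add: T_def)
  with a a_S show ?thesis
    unfolding T_def by blast
qed

section \<open>Clopen partitions\<close>

lemma clopen_partitionD:
  assumes "clopen_partition X U"
  shows "finite U" "\<And>R. R \<in> U \<Longrightarrow> openin X R" "\<And>R. R \<in> U \<Longrightarrow> closedin X R"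
    "\<And>R. R \<in> U \<Longrightarrow> R \<noteq> {}" "\<And>R S. R \<in> U \<Longrightarrow> S \<in> U \<Longrightarrow> R \<noteq> S \<Longrightarrow> R \<inter> S = {}"
    "\<Union>U = topspace X"
  using assms unfolding clopen_partition_def by simp_all

lemma clopen_partition_subset_topspace:
  "clopen_partition X U \<Longrightarrow> R \<in> U \<Longrightarrow> R \<subseteq> topspace X"
  using clopen_partitionD(6) by blast

lemma blk_unique:
  assumes "clopen_partition X U" "x \<in> topspace X"
  shows "\<exists>!R. R \<in> U \<and> x \<in> R"
proof -
  obtain R where R: "R \<in> U" "x \<in> R"
    using clopen_partitionD(6)[OF assms(1)] assms(2) by blast
  moreover have "R' = R" if "R' \<in> U" "x \<in> R'" for R'
    using clopen_partitionD(5)[OF assms(1) that(1) R(1)] that(2) R(2) by blast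
  ultimately show ?thesis by blast
qed

lemma blk_mem:
  assumes "clopen_partition X U" "x \<in> topspace X"
  shows "blk U x \<in> U" "x \<in> blk U x"
  using theI'[OF blk_unique[OF assms]] unfolding blk_def by auto

lemma blk_eq:
  assumes "clopen_partition X U" "R \<in> U" "x \<in> R"
  shows "blk U x = R"
proof -
  have x: "x \<in> topspace X"
    using clopen_partition_subset_topspace[OF assms(1,2)] assms(3) by blast
  show ?thesis
    using blk_unique[OF assms(1) x] blk_mem[OF assms(1) x] assms(2,3) by blast
qed

lemma openin_blk: "clopen_partition X U \<Longrightarrow> x \<in> topspace X \<Longrightarrow> openin X (blk U x)"
  using blk_mem(1) clopen_partitionD(2) by metis

lemma refines_refl: "refines U U"
  unfolding refines_def by blast

lemma refines_trans: "refines U V \<Longrightarrow> refines V W \<Longrightarrow> refines U W"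
  unfolding refines_def by (meson order_trans)

lemma blk_subset:
  assumes "clopen_partition X V" "clopen_partition X U" "refines V U" "x \<in> topspace X"
  shows "blk V x \<subseteq> blk U x"
proof -
  obtain S where S: "S \<in> U" "blk V x \<subseteq> S"
    using assms(3) blk_mem(1)[OF assms(1,4)] unfolding refines_def by blast
  moreover have "blk U x = S"
    using blk_eq[OF assms(2) S(1)] S(2) blk_mem(2)[OF assms(1,4)] by blast
  ultimately show ?thesis by simp
qed

lemma blk_refine_eq:
  assumes "clopen_partition X V" "clopen_partition X U" "refines V U"
    "x \<in> topspace X" "y \<in> topspace X" "blk V x = blk V y"
  shows "blk U x = blk U y"
proof -
  have "y \<in> blk U x"
    using blk_subset[OF assms(1-4)] blk_mem(2)[OF assms(1,5)] assms(6) by blast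
  then show ?thesis
    using blk_eq[OF assms(2) blk_mem(1)[OF assms(2,4)]] by simp
qed

definition partition_meet :: "'x set set \<Rightarrow> 'x set set \<Rightarrow> 'x set set" where
  "partition_meet U V = {R \<inter> S | R S. R \<in> U \<and> S \<in> V \<and> R \<inter> S \<noteq> {}}"

lemma clopen_partition_meet:
  assumes U: "clopen_partition X U" and V: "clopen_partition X V"
  shows "clopen_partition X (partition_meet U V)"
    "refines (partition_meet U V) U" "refines (partition_meet U V) V"
proof -
  have "partition_meet U V \<subseteq> (\<lambda>(R, S). R \<inter> S) ` (U \<times> V)"
    unfolding partition_meet_def by auto
  then have "finite (partition_meet U V)"
    using clopen_partitionD(1)[OF U] clopen_partitionD(1)[OF V] by (meson finite_SigmaI finite_imageI finite_subset)
  moreover have "\<forall>Q\<in>partition_meet U V. openin X Q \<and> closedin X Q \<and> Q \<noteq> {}"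
    unfolding partition_meet_def
    using clopen_partitionD(2,3)[OF U] clopen_partitionD(2,3)[OF V] by blast
  moreover have "\<forall>Q\<in>partition_meet U V. \<forall>Q'\<in>partition_meet U V. Q \<noteq> Q' \<longrightarrow> Q \<inter> Q' = {}"
    unfolding partition_meet_def
    using clopen_partitionD(5)[OF U] clopen_partitionD(5)[OF V] by blast
  moreover have "\<Union>(partition_meet U V) = topspace X"
  proof
    show "\<Union>(partition_meet U V) \<subseteq> topspace X"
      unfolding partition_meet_def using clopen_partitionD(6)[OF U] by blast
    show "topspace X \<subseteq> \<Union>(partition_meet U V)"
    proof
      fix x assume x: "x \<in> topspace X"
      then have "blk U x \<inter> blk V x \<in> partition_meet U V" "x \<in> blk U x \<inter> blk V x"
        using blk_mem[OF U x] blk_mem[OF V x] unfolding partition_meet_def by blast+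
      then show "x \<in> \<Union>(partition_meet U V)"
        by blast
    qed
  qed
  ultimately show "clopen_partition X (partition_meet U V)"
    unfolding clopen_partition_def by blast
  show "refines (partition_meet U V) U" "refines (partition_meet U V) V"
    unfolding refines_def partition_meet_def by blast+
qed

lemma common_refinement:
  assumes "finite \<F>" "\<forall>U\<in>\<F>. clopen_partition X U" "topspace X \<noteq> {}"
  shows "\<exists>W. clopen_partition X W \<and> (\<forall>U\<in>\<F>. refines W U)"
  using assms(1,2)
proof (induction rule: finite_induct)
  case empty
  have "clopen_partition X {topspace X}"
    using assms(3) unfolding clopen_partition_def by auto
  then show ?case by blast
next
  case (insert U \<F>)
  then obtain W where W: "clopen_partition X W" "\<forall>U\<in>\<F>. refines W U"
    by blast
  then show ?case
    using clopen_partition_meet[OF W(1), of U] insert.prems refines_trans by blast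
qed

lemma profinite_separating_partition:
  assumes "profinite_space X" "x \<in> topspace X" "y \<in> topspace X" "x \<noteq> y"
  shows "\<exists>U. clopen_partition X U \<and> blk U x \<noteq> blk U y"
proof -
  have "\<not> connected_component_of X x y"
    using assms(1,4) unfolding profinite_space_def totally_disconnected_space_def connected_component_of_def
    by blast
  \<comment> \<open>In a compact Hausdorff space components and quasi-components coincide.\<close>
  then have "\<not> quasi_component_of X x y"
    using assms(1) quasi_eq_connected_component_of[of X x] unfolding profinite_space_def by simp
  then obtain T where T: "x \<in> T" "closedin X T" "openin X T" "y \<notin> T"
    using assms(2,3) unfolding quasi_component_of by blast
  define U where "U = {T, topspace X - T}"
  have "clopen_partition X U"
    using T assms(3) openin_subset[OF T(3)] unfolding clopen_partition_def U_def
    by (auto simp: closedin_diff openin_diff)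
  moreover have "blk U x = T" "blk U y = topspace X - T"
    using blk_eq[OF calculation] T(1,4) assms(3) unfolding U_def by auto
  ultimately show ?thesis
    using T(1) by blast
qed

lemma compactin_blk_cover:
  assumes "compactin X K" and P: "\<And>x. x \<in> K \<Longrightarrow> clopen_partition X (P x)"
  shows "\<exists>C\<subseteq>K. finite C \<and> K \<subseteq> (\<Union>x\<in>C. blk (P x) x)"
proof -
  have K: "K \<subseteq> topspace X"
    using assms(1) compactin_subset_topspace by blast
  have "\<forall>T\<in>(\<lambda>x. blk (P x) x) ` K. openin X T"
    using openin_blk[OF P] K by blast
  moreover have "x \<in> blk (P x) x" if "x \<in> K" for x
    using blk_mem(2)[OF P] K that by blast
  then have "K \<subseteq> \<Union>((\<lambda>x. blk (P x) x) ` K)"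
    by blast
  ultimately obtain \<F> where \<F>: "finite \<F>" "\<F> \<subseteq> (\<lambda>x. blk (P x) x) ` K" "K \<subseteq> \<Union>\<F>"
    using assms(1) unfolding compactin_def by meson
  obtain C where "C \<subseteq> K" "finite C" "\<F> = (\<lambda>x. blk (P x) x) ` C"
    using finite_subset_image[OF \<F>(1,2)] by blast
  with \<F>(3) show ?thesis
    by blast
qed

locale definable_semigroup_family =
  fixes FZ :: "'f \<Rightarrow> 'a list \<Rightarrow> 'a" and RZ :: "'r \<Rightarrow> 'a list \<Rightarrow> bool"
    and FN :: "'f \<Rightarrow> int list \<Rightarrow> int" and RN :: "'r \<Rightarrow> int list \<Rightarrow> bool"
    and plusS zeroS :: 'f and lessS :: 'r
    and j :: "int \<Rightarrow> 'a"
    and X :: "'x topology"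
    and m r :: nat
    and D :: "'a list set"
    and CF :: "'a list \<Rightarrow> 'a list set"
    and Y :: "('x \<times> 'a list \<times> 'a list) set"
    and mul :: "'a list \<Rightarrow> ('x \<times> 'a list) \<Rightarrow> ('x \<times> 'a list) \<Rightarrow> ('x \<times> 'a list)"
  assumes std_plus: "\<forall>a b. FN plusS [a, b] = a + b"
    and std_zero: "FN zeroS [] = 0"
    and std_less: "\<forall>a b. RN lessS [a, b] \<longleftrightarrow> a < b"
    and elem: "elem_emb (FN, RN) (FZ, RZ) j"
    and sat: "saturated_for (FZ, RZ)
               ((UNIV :: 'f set) <+> (UNIV :: 'r set) <+> (UNIV :: nat set)
                 <+> {R. openin X R \<and> closedin X R})"
    and prof: "profinite_space X"
    and D_dim: "D \<subseteq> {d. length d = m}"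
    and D_def: "def0 (FZ, RZ) m D"
    and C_dim: "\<forall>d\<in>D. CF d \<subseteq> {c. length c = r}"
    and C_bdd: "\<forall>d\<in>D. bounded_in (FZ, RZ) plusS zeroS lessS r (CF d)"
    and C_def: "def0 (FZ, RZ) (r + m) {c @ d | c d. d \<in> D \<and> c \<in> CF d}"
    and Y_sub: "Y \<subseteq> {(x, c, d). x \<in> topspace X \<and> d \<in> D \<and> c \<in> CF d}"
    and Y_nonempty: "\<forall>d\<in>D. {(x, c). (x, c, d) \<in> Y} \<noteq> {}"
    and Y_closed: "\<forall>d\<in>D. \<forall>y\<in>{(x, c). (x, c, d) \<in> Y}. \<forall>y'\<in>{(x, c). (x, c, d) \<in> Y}.
                     mul d y y' \<in> {(x, c). (x, c, d) \<in> Y}"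
    and Y_assoc: "\<forall>d\<in>D. \<forall>y\<in>{(x, c). (x, c, d) \<in> Y}. \<forall>y'\<in>{(x, c). (x, c, d) \<in> Y}.
                     \<forall>y''\<in>{(x, c). (x, c, d) \<in> Y}. mul d (mul d y y') y'' = mul d y (mul d y' y'')"
    and Y_reldef: "\<exists>U0 F0. clopen_partition X U0
                     \<and> F0 \<subseteq> {(R, c, d). R \<in> U0 \<and> d \<in> D \<and> c \<in> CF d}
                     \<and> (\<forall>R\<in>U0. def0 (FZ, RZ) (r + m) {c @ d | c d. (R, c, d) \<in> F0})
                     \<and> Y = {(x, c, d). x \<in> topspace X \<and> d \<in> D \<and> c \<in> CF d \<and> (blk U0 x, c, d) \<in> F0}"
    and prod_prodef: "\<forall>U. clopen_partition X U \<longrightarrow>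
       (\<exists>V (mm :: ('x set \<times> 'a list \<times> 'a list) \<Rightarrow> ('x set \<times> 'a list \<times> 'a list)
                    \<Rightarrow> ('x set \<times> 'a list \<times> 'a list)).
          clopen_partition X V \<and> refines V U
        \<and> (\<forall>R\<in>V. \<forall>R'\<in>V. \<forall>d\<in>D. \<forall>c\<in>CF d. \<forall>c'\<in>CF d.
              (case mm (R, c, d) (R', c', d) of (S, c'', d'') \<Rightarrow> S \<in> U \<and> d'' \<in> D \<and> c'' \<in> CF d''))
        \<and> (\<forall>R\<in>V. \<forall>R'\<in>V. \<forall>S\<in>U. def0 (FZ, RZ) (r + r + m + r + m)
              {c @ c' @ d @ c'' @ d'' | c c' d c'' d''.
                 d \<in> D \<and> c \<in> CF d \<and> c' \<in> CF d \<and> mm (R, c, d) (R', c', d) = (S, c'', d'')})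
        \<and> (\<forall>d\<in>D. \<forall>x c x' c'. (x, c, d) \<in> Y \<and> (x', c', d) \<in> Y \<longrightarrow>
              (case mul d (x, c) (x', c') of (x'', c'') \<Rightarrow> (blk U x'', c'', d))
                = mm (blk V x, c, d) (blk V x', c', d)))"
begin

definition fibre :: "'a list \<Rightarrow> ('x \<times> 'a list) set" where
  "fibre d = {(x, c). (x, c, d) \<in> Y}"

definition Y_presentation :: "'x set set \<Rightarrow> ('x set \<times> 'a list \<times> 'a list) set \<Rightarrow> bool" where
  "Y_presentation U F \<longleftrightarrow> clopen_partition X U
     \<and> F \<subseteq> {(R, c, d). R \<in> U \<and> d \<in> D \<and> c \<in> CF d}
     \<and> (\<forall>R\<in>U. def0 (FZ, RZ) (r + m) {c @ d | c d. (R, c, d) \<in> F})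
     \<and> Y = {(x, c, d). x \<in> topspace X \<and> d \<in> D \<and> c \<in> CF d \<and> (blk U x, c, d) \<in> F}"

definition U0 :: "'x set set" where
  "U0 = (SOME U. \<exists>F. Y_presentation U F)"

definition F0 :: "('x set \<times> 'a list \<times> 'a list) set" where
  "F0 = (SOME F. Y_presentation U0 F)"

lemma Y_presentation_U0_F0: "Y_presentation U0 F0"
proof -
  have "\<exists>U F. Y_presentation U F"
    using Y_reldef unfolding Y_presentation_def by blast
  then have "\<exists>F. Y_presentation U0 F"
    unfolding U0_def by (rule someI_ex)
  then show ?thesis
    unfolding F0_def by (rule someI_ex)
qed

lemma clopen_partition_U0: "clopen_partition X U0"
  using Y_presentation_U0_F0 unfolding Y_presentation_def by blast

lemma F0_subset: "F0 \<subseteq> {(R, c, d). R \<in> U0 \<and> d \<in> D \<and> c \<in> CF d}"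
  using Y_presentation_U0_F0 unfolding Y_presentation_def by blast

lemma def0_F0: "R \<in> U0 \<Longrightarrow> def0 (FZ, RZ) (r + m) {c @ d | c d. (R, c, d) \<in> F0}"
  using Y_presentation_U0_F0 unfolding Y_presentation_def by blast

lemma Y_iff: "(x, c, d) \<in> Y \<longleftrightarrow> x \<in> topspace X \<and> d \<in> D \<and> c \<in> CF d \<and> (blk U0 x, c, d) \<in> F0"
proof -
  have Y_eq: "Y = {(x, c, d). x \<in> topspace X \<and> d \<in> D \<and> c \<in> CF d \<and> (blk U0 x, c, d) \<in> F0}"
    using Y_presentation_U0_F0 unfolding Y_presentation_def by blast
  show ?thesis
    by (subst Y_eq) simp
qed

text \<open>For each \<open>U\<close> we fix a partition \<open>V U\<close> and a table \<open>prod_table U\<close>, the \<open>V\<close> and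
  \<open>m\<^sub>V\<^sub>,\<^sub>U\<close> of the pro-definability hypothesis.\<close>

definition prod_approx :: "'x set set \<Rightarrow> 'x set set
    \<Rightarrow> ('x set \<times> 'a list \<times> 'a list \<Rightarrow> 'x set \<times> 'a list \<times> 'a list \<Rightarrow> 'x set \<times> 'a list \<times> 'a list) \<Rightarrow> bool" where
  "prod_approx U V mm \<longleftrightarrow> clopen_partition X V \<and> refines V U
    \<and> (\<forall>R\<in>V. \<forall>R'\<in>V. \<forall>d\<in>D. \<forall>c\<in>CF d. \<forall>c'\<in>CF d.
          (case mm (R, c, d) (R', c', d) of (S, c'', d'') \<Rightarrow> S \<in> U \<and> d'' \<in> D \<and> c'' \<in> CF d''))
    \<and> (\<forall>R\<in>V. \<forall>R'\<in>V. \<forall>S\<in>U. def0 (FZ, RZ) (r + r + m + r + m)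
          {c @ c' @ d @ c'' @ d'' | c c' d c'' d''.
             d \<in> D \<and> c \<in> CF d \<and> c' \<in> CF d \<and> mm (R, c, d) (R', c', d) = (S, c'', d'')})
    \<and> (\<forall>d\<in>D. \<forall>x c x' c'. (x, c, d) \<in> Y \<and> (x', c', d) \<in> Y \<longrightarrow>
          (case mul d (x, c) (x', c') of (x'', c'') \<Rightarrow> (blk U x'', c'', d))
            = mm (blk V x, c, d) (blk V x', c', d))"

definition prod_partition :: "'x set set \<Rightarrow> 'x set set" where
  "prod_partition U = (SOME V. \<exists>mm. prod_approx U V mm)"

abbreviation V :: "'x set set \<Rightarrow> 'x set set" where
  "V \<equiv> prod_partition"

definition prod_table :: "'x set set
    \<Rightarrow> ('x set \<times> 'a list \<times> 'a list \<Rightarrow> 'x set \<times> 'a list \<times> 'a list \<Rightarrow> 'x set \<times> 'a list \<times> 'a list)" where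
  "prod_table U = (SOME mm. prod_approx U (V U) mm)"

lemma prod_approx_prod_partition:
  assumes "clopen_partition X U"
  shows "prod_approx U (V U) (prod_table U)"
proof -
  have "\<exists>W mm. prod_approx U W mm"
    using prod_prodef assms unfolding prod_approx_def by blast
  then have "\<exists>mm. prod_approx U (V U) mm"
    unfolding prod_partition_def by (rule someI_ex)
  then show ?thesis
    unfolding prod_table_def by (rule someI_ex)
qed

context
  fixes U assumes U: "clopen_partition X U"
begin

lemma clopen_partition_prod_partition: "clopen_partition X (V U)"
  using prod_approx_prod_partition[OF U] unfolding prod_approx_def by blast

lemma refines_prod_partition: "refines (V U) U"
  using prod_approx_prod_partition[OF U] unfolding prod_approx_def by blast

lemma prod_table_range:
  assumes "R \<in> V U" "R' \<in> V U" "d \<in> D" "c \<in> CF d" "c' \<in> CF d"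
    and "prod_table U (R, c, d) (R', c', d) = (S, c'', d'')"
  shows "d'' \<in> D \<and> c'' \<in> CF d''"
proof -
  have "\<forall>R\<in>V U. \<forall>R'\<in>V U. \<forall>d\<in>D. \<forall>c\<in>CF d. \<forall>c'\<in>CF d.
      case prod_table U (R, c, d) (R', c', d) of (S, c'', d'') \<Rightarrow> S \<in> U \<and> d'' \<in> D \<and> c'' \<in> CF d''"
    using prod_approx_prod_partition[OF U] unfolding prod_approx_def by (elim conjE) assumption
  from this[rule_format, OF assms(1-5)] assms(6) show ?thesis
    by simp
qed

lemma def0_prod_table:
  "R \<in> V U \<Longrightarrow> R' \<in> V U \<Longrightarrow> S \<in> U \<Longrightarrow>
   def0 (FZ, RZ) (r + r + m + r + m) {c @ c' @ d @ c'' @ d'' | c c' d c'' d''.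
     d \<in> D \<and> c \<in> CF d \<and> c' \<in> CF d \<and> prod_table U (R, c, d) (R', c', d) = (S, c'', d'')}"
  using prod_approx_prod_partition[OF U] unfolding prod_approx_def by blast

lemma prod_table_mul:
  "d \<in> D \<Longrightarrow> (x, c, d) \<in> Y \<Longrightarrow> (x', c', d) \<in> Y \<Longrightarrow>
   (case mul d (x, c) (x', c') of (x'', c'') \<Rightarrow> (blk U x'', c'', d))
     = prod_table U (blk (V U) x, c, d) (blk (V U) x', c', d)"
  using prod_approx_prod_partition[OF U] unfolding prod_approx_def by blast

end

definition proj :: "'x set set \<Rightarrow> 'x \<times> 'a list \<Rightarrow> 'x set \<times> 'a list" where
  "proj U y = (blk U (fst y), snd y)"

lemma fibre_iff: "(x, c) \<in> fibre d \<longleftrightarrow> (x, c, d) \<in> Y"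
  unfolding fibre_def by simp

lemma fst_fibre: "y \<in> fibre d \<Longrightarrow> fst y \<in> topspace X"
  unfolding fibre_def using Y_sub by auto

lemma fibre_nonempty: "d \<in> D \<Longrightarrow> fibre d \<noteq> {}"
  using Y_nonempty unfolding fibre_def by blast

lemma topspace_nonempty: "d \<in> D \<Longrightarrow> topspace X \<noteq> {}"
  using fibre_nonempty fst_fibre by blast

lemma mul_fibre: "d \<in> D \<Longrightarrow> y \<in> fibre d \<Longrightarrow> y' \<in> fibre d \<Longrightarrow> mul d y y' \<in> fibre d"
  unfolding fibre_def by (rule Y_closed[rule_format])

lemma mul_assoc_fibre:
  "d \<in> D \<Longrightarrow> y \<in> fibre d \<Longrightarrow> y' \<in> fibre d \<Longrightarrow> y'' \<in> fibre d \<Longrightarrow>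
   mul d (mul d y y') y'' = mul d y (mul d y' y'')"
  unfolding fibre_def by (rule Y_assoc[rule_format])

lemma prod_table_proj:
  assumes U: "clopen_partition X U" and d: "d \<in> D" and y: "y \<in> fibre d" "y' \<in> fibre d"
  shows "prod_table U (blk (V U) (fst y), snd y, d) (blk (V U) (fst y'), snd y', d) =
    (blk U (fst (mul d y y')), snd (mul d y y'), d)"
proof -
  obtain x c x' c' where yy: "y = (x, c)" "y' = (x', c')"
    by (cases y, cases y')
  obtain x'' c'' where "mul d (x, c) (x', c') = (x'', c'')"
    by (cases "mul d (x, c) (x', c')")
  with prod_table_mul[OF U d, of x c x' c'] y yy show ?thesis
    unfolding fibre_def by simp
qed

lemma proj_mul_right:
  assumes U: "clopen_partition X U" and d: "d \<in> D"
    and y: "y1 \<in> fibre d" "y2 \<in> fibre d" "a \<in> fibre d" and eq: "proj (V U) y1 = proj (V U) y2"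
  shows "proj U (mul d y1 a) = proj U (mul d y2 a)"
  using prod_table_proj[OF U d y(1,3)] prod_table_proj[OF U d y(2,3)] eq
  unfolding proj_def by simp

lemma proj_refine:
  "clopen_partition X W \<Longrightarrow> clopen_partition X U \<Longrightarrow> refines W U \<Longrightarrow>
   fst y \<in> topspace X \<Longrightarrow> fst y' \<in> topspace X \<Longrightarrow> proj W y = proj W y' \<Longrightarrow> proj U y = proj U y'"
  unfolding proj_def using blk_refine_eq by (metis prod.inject)

lemma fibre_separating_partition:
  assumes "y1 \<in> fibre d" "y2 \<in> fibre d" "y1 \<noteq> y2"
  shows "\<exists>U. clopen_partition X U \<and> proj U y1 \<noteq> proj U y2"
proof (cases "snd y1 = snd y2")
  case False
  then show ?thesis
    using clopen_partition_U0 unfolding proj_def by auto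
next
  case True
  with assms(3) have "fst y1 \<noteq> fst y2"
    by (simp add: prod_eq_iff)
  then obtain U where "clopen_partition X U" "blk U (fst y1) \<noteq> blk U (fst y2)"
    using profinite_separating_partition[OF prof fst_fibre[OF assms(1)] fst_fibre[OF assms(2)]] by blast
  then show ?thesis
    unfolding proj_def by auto
qed

text \<open>Closed subsets of a fibre in the profinite topology, whose basic open sets are the
  fibres of the maps \<open>proj U\<close>.\<close>

definition fibre_closed :: "'a list \<Rightarrow> ('x \<times> 'a list) set \<Rightarrow> bool" where
  "fibre_closed d K \<longleftrightarrow> K \<subseteq> fibre d \<and>
     (\<forall>y\<in>fibre d - K. \<exists>U. clopen_partition X U \<and> (\<forall>y'\<in>K. proj U y' \<noteq> proj U y))"

lemma fibre_closed_subset: "fibre_closed d K \<Longrightarrow> K \<subseteq> fibre d"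
  unfolding fibre_closed_def by simp

lemma fibre_closed_fibre: "fibre_closed d (fibre d)"
  unfolding fibre_closed_def by simp

lemma fibre_closed_Inter:
  assumes "\<K> \<noteq> {}" "\<forall>K\<in>\<K>. fibre_closed d K"
  shows "fibre_closed d (\<Inter>\<K>)"
  unfolding fibre_closed_def
proof (intro conjI ballI)
  show "\<Inter>\<K> \<subseteq> fibre d"
    using assms fibre_closed_subset by blast
  fix y assume y: "y \<in> fibre d - \<Inter>\<K>"
  then obtain K where K: "K \<in> \<K>" "y \<in> fibre d - K"
    by blast
  then obtain U where "clopen_partition X U" "\<forall>y'\<in>K. proj U y' \<noteq> proj U y"
    using assms(2) unfolding fibre_closed_def by blast
  with K(1) show "\<exists>U. clopen_partition X U \<and> (\<forall>y'\<in>\<Inter>\<K>. proj U y' \<noteq> proj U y)"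
    by blast
qed

lemma closedin_fibre_slice:
  assumes K: "fibre_closed d K"
  shows "closedin X {x. (x, c) \<in> K}"
proof -
  define Kc where "Kc = {x. (x, c) \<in> K}"
  have Kc_top: "Kc \<subseteq> topspace X"
    using fibre_closed_subset[OF K] fst_fibre unfolding Kc_def by fastforce
  have separate: "\<exists>U. clopen_partition X U \<and> blk U x \<inter> Kc = {}" if x: "x \<in> topspace X - Kc" for x
  proof (cases "(x, c) \<in> fibre d")
    case True
    with x K obtain U where U: "clopen_partition X U" "\<forall>y'\<in>K. proj U y' \<noteq> proj U (x, c)"
      unfolding fibre_closed_def Kc_def by blast
    have "blk U x' \<noteq> blk U x" if "x' \<in> Kc" for x'
      using U(2) that unfolding Kc_def proj_def by force
    then show ?thesis
      using U(1) blk_eq[OF U(1) blk_mem(1)[OF U(1)]] x by blast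
  next
    case False
    \<comment> \<open>\<open>Y\<close> is a union of blocks of \<open>U0\<close>.\<close>
    have "(x', c) \<notin> fibre d" if "x' \<in> blk U0 x" for x'
    proof
      assume "(x', c) \<in> fibre d"
      moreover have "blk U0 x' = blk U0 x"
        using blk_eq[OF clopen_partition_U0 blk_mem(1)[OF clopen_partition_U0] that] x by blast
      ultimately show False
        using False x unfolding fibre_iff Y_iff by simp
    qed
    then show ?thesis
      using clopen_partition_U0 fibre_closed_subset[OF K] unfolding Kc_def by blast
  qed
  have "openin X (topspace X - Kc)"
  proof (subst openin_subopen, intro ballI)
    fix x assume x: "x \<in> topspace X - Kc"
    with separate obtain U where U: "clopen_partition X U" "blk U x \<inter> Kc = {}"
      by blast
    from x have "openin X (blk U x)" "x \<in> blk U x" "blk U x \<subseteq> topspace X"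
      using openin_blk[OF U(1)] blk_mem[OF U(1)] clopen_partition_subset_topspace[OF U(1)] by auto
    with U(2) show "\<exists>T. openin X T \<and> x \<in> T \<and> T \<subseteq> topspace X - Kc"
      by blast
  qed
  with Kc_top show ?thesis
    unfolding closedin_def Kc_def by blast
qed

lemma fibre_closed_finite_cover:
  assumes fin: "finite (CF d)" and K: "fibre_closed d K"
    and P: "\<And>y. y \<in> K \<Longrightarrow> clopen_partition X (P y)"
  shows "\<exists>F. finite F \<and> F \<subseteq> K \<and> (\<forall>y'\<in>K. \<exists>y\<in>F. proj (P y) y' = proj (P y) y)"
proof -
  have "\<forall>c. \<exists>C\<subseteq>{x. (x, c) \<in> K}. finite C \<and> {x. (x, c) \<in> K} \<subseteq> (\<Union>x\<in>C. blk (P (x, c)) x)"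
  proof
    fix c
    show "\<exists>C\<subseteq>{x. (x, c) \<in> K}. finite C \<and> {x. (x, c) \<in> K} \<subseteq> (\<Union>x\<in>C. blk (P (x, c)) x)"
    proof (rule compactin_blk_cover)
      show "compactin X {x. (x, c) \<in> K}"
        using prof closedin_fibre_slice[OF K] closedin_compact_space unfolding profinite_space_def by blast
    qed (use P in simp)
  qed
  then obtain C where "\<forall>c. C c \<subseteq> {x. (x, c) \<in> K} \<and> finite (C c) \<and>
      {x. (x, c) \<in> K} \<subseteq> (\<Union>x\<in>C c. blk (P (x, c)) x)"
    using choice[of "\<lambda>c C. C \<subseteq> {x. (x, c) \<in> K} \<and> finite C \<and> {x. (x, c) \<in> K} \<subseteq> (\<Union>x\<in>C. blk (P (x, c)) x)"]
    by blast
  then have C: "\<And>c. C c \<subseteq> {x. (x, c) \<in> K}" "\<And>c. finite (C c)"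
    "\<And>c. {x. (x, c) \<in> K} \<subseteq> (\<Union>x\<in>C c. blk (P (x, c)) x)"
    by blast+
  define F where "F = (\<Union>c\<in>CF d. (\<lambda>x. (x, c)) ` C c)"
  have "\<exists>y\<in>F. proj (P y) y' = proj (P y) y" if y': "y' \<in> K" for y'
  proof -
    obtain x' c where xc: "y' = (x', c)"
      by (cases y')
    with y' have c: "c \<in> CF d"
      using fibre_closed_subset[OF K] unfolding fibre_def Y_iff by blast
    from C(3) y' xc obtain x where x: "x \<in> C c" "x' \<in> blk (P (x, c)) x"
      by blast
    with C(1) have xK: "(x, c) \<in> K"
      by blast
    with fibre_closed_subset[OF K] have "x \<in> topspace X"
      using fst_fibre by fastforce
    with x(2) have "blk (P (x, c)) x' = blk (P (x, c)) x"
      using blk_eq[OF P[OF xK] blk_mem(1)[OF P[OF xK]]] by blast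
    moreover have "(x, c) \<in> F"
      unfolding F_def using x(1) c by blast
    ultimately show ?thesis
      unfolding xc proj_def by force
  qed
  moreover have "finite F" "F \<subseteq> K"
    unfolding F_def using fin C(1,2) by auto
  ultimately show ?thesis
    by blast
qed

lemma fibre_closed_fip:
  assumes fin: "finite (CF d)" and cl: "\<forall>K\<in>\<K>. fibre_closed d K"
    and fip: "\<forall>F. finite F \<and> F \<subseteq> \<K> \<longrightarrow> \<Inter>F \<inter> fibre d \<noteq> {}"
  shows "\<Inter>\<K> \<inter> fibre d \<noteq> {}"
proof
  assume empty: "\<Inter>\<K> \<inter> fibre d = {}"
  have "\<forall>y\<in>fibre d. \<exists>KU. fst KU \<in> \<K> \<and> y \<notin> fst KU \<and> clopen_partition X (snd KU) \<and>
      (\<forall>y'\<in>fst KU. proj (snd KU) y' \<noteq> proj (snd KU) y)"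
  proof
    fix y assume y: "y \<in> fibre d"
    with empty obtain K where K: "K \<in> \<K>" "y \<in> fibre d - K"
      by blast
    with cl obtain U where "clopen_partition X U" "\<forall>y'\<in>K. proj U y' \<noteq> proj U y"
      unfolding fibre_closed_def by blast
    with K show "\<exists>KU. fst KU \<in> \<K> \<and> y \<notin> fst KU \<and> clopen_partition X (snd KU) \<and>
        (\<forall>y'\<in>fst KU. proj (snd KU) y' \<noteq> proj (snd KU) y)"
      by (intro exI[of _ "(K, U)"]) simp
  qed
  then obtain KU where KU: "\<forall>y\<in>fibre d. fst (KU y) \<in> \<K> \<and> y \<notin> fst (KU y) \<and>
      clopen_partition X (snd (KU y)) \<and> (\<forall>y'\<in>fst (KU y). proj (snd (KU y)) y' \<noteq> proj (snd (KU y)) y)"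
    by (rule bchoice[elim_format]) (elim exE, rule that, assumption)
  then have "\<And>y. y \<in> fibre d \<Longrightarrow> clopen_partition X (snd (KU y))"
    by blast
  then obtain F where F: "finite F" "F \<subseteq> fibre d"
      "\<forall>y'\<in>fibre d. \<exists>y\<in>F. proj (snd (KU y)) y' = proj (snd (KU y)) y"
    using fibre_closed_finite_cover[where P = "\<lambda>y. snd (KU y)", OF fin fibre_closed_fibre] by blast
  have "finite ((\<lambda>y. fst (KU y)) ` F) \<and> (\<lambda>y. fst (KU y)) ` F \<subseteq> \<K>"
    using F(1,2) KU by auto
  then have "\<Inter>((\<lambda>y. fst (KU y)) ` F) \<inter> fibre d \<noteq> {}"
    using fip by blast
  then obtain z where z: "z \<in> fibre d" "\<forall>y\<in>F. z \<in> fst (KU y)"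
    by blast
  then obtain y where y: "y \<in> F" "proj (snd (KU y)) z = proj (snd (KU y)) y"
    using F(3) by blast
  then have "\<forall>y'\<in>fst (KU y). proj (snd (KU y)) y' \<noteq> proj (snd (KU y)) y"
    using KU F(2) by blast
  with y z(2) show False
    by blast
qed

lemma fibre_closed_mul_right:
  assumes d: "d \<in> D" and fin: "finite (CF d)" and K: "fibre_closed d K" and a: "a \<in> fibre d"
  shows "fibre_closed d ((\<lambda>k. mul d k a) ` K)"
  unfolding fibre_closed_def
proof (intro conjI ballI)
  have KY: "K \<subseteq> fibre d"
    using K by (rule fibre_closed_subset)
  then show "(\<lambda>k. mul d k a) ` K \<subseteq> fibre d"
    using mul_fibre[OF d _ a] by blast
  fix y assume y: "y \<in> fibre d - (\<lambda>k. mul d k a) ` K"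
  have "\<forall>k\<in>K. \<exists>U. clopen_partition X U \<and> proj U (mul d k a) \<noteq> proj U y"
    using fibre_separating_partition mul_fibre[OF d _ a] KY y by blast
  then obtain P where P: "\<forall>k\<in>K. clopen_partition X (P k) \<and> proj (P k) (mul d k a) \<noteq> proj (P k) y"
    by (rule bchoice[elim_format]) (elim exE, rule that, assumption)
  \<comment> \<open>Right multiplication by \<open>a\<close> is continuous: \<open>proj (P k)\<close> of \<open>k' a\<close> depends only on \<open>proj (V (P k)) k'\<close>.\<close>
  obtain F where F: "finite F" "F \<subseteq> K" "\<forall>k'\<in>K. \<exists>k\<in>F. proj (V (P k)) k' = proj (V (P k)) k"
    using fibre_closed_finite_cover[OF fin K, of "\<lambda>k. V (P k)"] P clopen_partition_prod_partition by blast
  obtain W where W: "clopen_partition X W" "\<forall>U\<in>P ` F. refines W U"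
    using common_refinement[of "P ` F" X] F(1,2) P topspace_nonempty[OF d] by blast
  have "proj W (mul d k' a) \<noteq> proj W y" if k': "k' \<in> K" for k'
  proof
    assume eq: "proj W (mul d k' a) = proj W y"
    obtain k where k: "k \<in> F" "proj (V (P k)) k' = proj (V (P k)) k"
      using F(3) k' by blast
    with F(2) P have U: "clopen_partition X (P k)" and sep: "proj (P k) (mul d k a) \<noteq> proj (P k) y"
      by blast+
    have "proj (P k) (mul d k' a) = proj (P k) (mul d k a)"
      using proj_mul_right[OF U d _ _ a k(2)] KY k' k(1) F(2) by blast
    moreover have "proj (P k) (mul d k' a) = proj (P k) y"
      using proj_refine[OF W(1) U _ _ _ eq] W(2) k(1) mul_fibre[OF d _ a] KY k' y fst_fibre by blast
    ultimately show False
      using sep by simp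
  qed
  with W(1) show "\<exists>U. clopen_partition X U \<and> (\<forall>y'\<in>(\<lambda>k. mul d k a) ` K. proj U y' \<noteq> proj U y)"
    by blast
qed

lemma fibre_closed_fixes:
  assumes d: "d \<in> D" and a: "a \<in> fibre d"
  shows "fibre_closed d {x\<in>fibre d. mul d x a = a}"
  unfolding fibre_closed_def
proof (intro conjI ballI)
  fix y assume y: "y \<in> fibre d - {x\<in>fibre d. mul d x a = a}"
  then obtain U where U: "clopen_partition X U" "proj U (mul d y a) \<noteq> proj U a"
    using fibre_separating_partition[OF mul_fibre[OF d _ a] a] by blast
  have "proj (V U) y' \<noteq> proj (V U) y" if "y' \<in> {x\<in>fibre d. mul d x a = a}" for y'
    using proj_mul_right[OF U(1) d _ _ a, of y' y] that y U(2) by auto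
  with clopen_partition_prod_partition[OF U(1)]
  show "\<exists>U. clopen_partition X U \<and> (\<forall>y'\<in>{x\<in>fibre d. mul d x a = a}. proj U y' \<noteq> proj U y)"
    by blast
qed blast

lemma idempotent_finite_fibre:
  assumes d: "d \<in> D" and fin: "finite (CF d)"
  shows "\<exists>e\<in>fibre d. mul d e e = e"
  by (rule Ellis_Numakura[where cl = "fibre_closed d"])
    (use fibre_nonempty[OF d] fibre_closed_fibre fibre_closed_subset fibre_closed_Inter
      fibre_closed_fip[OF fin] mul_fibre[OF d] mul_assoc_fibre[OF d]
      fibre_closed_mul_right[OF d fin] fibre_closed_fixes[OF d] in auto)

lemma sat_int_iff: "sat (FN, RN) \<phi> t \<longleftrightarrow> sat (FZ, RZ) \<phi> (j \<circ> t)"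
  using elem unfolding elem_emb_def by blast

lemma add_neg_Z: "FZ plusS [THE e. FZ plusS [e, c] = FZ zeroS [], c] = FZ zeroS []"
proof -
  \<comment> \<open>\<open>bounded_in\<close> names \<open>-c\<close> by a definite description, so unique negatives must be
    transferred from \<open>\<int>\<close>.\<close>
  define \<Theta> :: "('f, 'r) fm" where "\<Theta> = Alls [0] (Ex 1 (Conj (Eq (Fn plusS [Var 1, Var 0]) (Fn zeroS []))
    (Alls [2] (Imp (Eq (Fn plusS [Var 2, Var 0]) (Fn zeroS [])) (Eq (Var 2) (Var 1))))))"
  have "sat (FN, RN) \<Theta> (\<lambda>_. 0)"
    unfolding \<Theta>_def sat_Alls
  proof (intro allI impI)
    fix t :: "nat \<Rightarrow> int"
    have "s 2 = - t 0" if "\<forall>i. i \<notin> set [2] \<longrightarrow> s i = (t(1 := - t 0)) i" "s 2 + s 0 = 0" for s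
    proof -
      have "s 0 = t 0"
        using that(1)[rule_format, of 0] by simp
      with that(2) show ?thesis
        by linarith
    qed
    then have "sat (FN, RN) (Conj (Eq (Fn plusS [Var 1, Var 0]) (Fn zeroS []))
      (Alls [2] (Imp (Eq (Fn plusS [Var 2, Var 0]) (Fn zeroS [])) (Eq (Var 2) (Var 1))))) (t(1 := - t 0))"
      using std_plus std_zero by (simp add: sat_Alls)
    then show "sat (FN, RN) (Ex 1 (Conj (Eq (Fn plusS [Var 1, Var 0]) (Fn zeroS []))
      (Alls [2] (Imp (Eq (Fn plusS [Var 2, Var 0]) (Fn zeroS [])) (Eq (Var 2) (Var 1)))))) t"
      by (simp only: sat.simps) blast
  qed
  then have "sat (FZ, RZ) \<Theta> (j \<circ> (\<lambda>_. 0))"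
    using sat_int_iff by blast
  from this[unfolded \<Theta>_def sat_Alls, rule_format, of "(j \<circ> (\<lambda>_. 0))(0 := c)"]
  have "sat (FZ, RZ) (Ex 1 (Conj (Eq (Fn plusS [Var 1, Var 0]) (Fn zeroS []))
      (Alls [2] (Imp (Eq (Fn plusS [Var 2, Var 0]) (Fn zeroS [])) (Eq (Var 2) (Var 1))))))
      ((j \<circ> (\<lambda>_. 0))(0 := c))"
    by simp
  then obtain a where a: "FZ plusS [a, c] = FZ zeroS []"
    and uniq: "\<forall>s. (\<forall>i::nat. i \<noteq> 2 \<longrightarrow> s i = ((j \<circ> (\<lambda>_. 0))(0 := c, 1 := a)) i) \<longrightarrow>
      FZ plusS [s 2, c] = FZ zeroS [] \<longrightarrow> s 2 = a"
    by (auto simp: sat_Alls)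
  have "e = a" if "FZ plusS [e, c] = FZ zeroS []" for e
    using uniq[rule_format, of "(j \<circ> (\<lambda>_. 0))(0 := c, 1 := a, 2 := e)"] that by simp
  with a have "\<exists>!e. FZ plusS [e, c] = FZ zeroS []"
    by blast
  then show ?thesis
    by (rule theI')
qed

text \<open>Assignments with the parameter \<open>d\<close> in the variables \<open>r, \<dots>, r + m - 1\<close>; the variables
  \<open>0, \<dots>, r - 1\<close> range over \<open>C\<^sub>d\<close>.\<close>

definition param_asg :: "'b \<Rightarrow> 'b list \<Rightarrow> nat \<Rightarrow> 'b" where
  "param_asg z d v = (if r \<le> v \<and> v < r + m then d ! (v - r) else z)"

lemma map_param_asg: "length d = m \<Longrightarrow> map (param_asg z d) [r..<r + m] = d"
  by (rule nth_equalityI) (simp_all add: param_asg_def)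

lemma comp_param_asg: "length d = m \<Longrightarrow> j \<circ> param_asg z d = param_asg (j z) (map j d)"
  by (auto simp: fun_eq_iff param_asg_def)

definition graph_C :: "'a list set" where
  "graph_C = {c @ d | c d. d \<in> D \<and> c \<in> CF d}"

lemma append_in_graph_C: "length c = r \<Longrightarrow> c @ d \<in> graph_C \<longleftrightarrow> d \<in> D \<and> c \<in> CF d"
  unfolding graph_C_def using C_dim by fastforce

definition C_fm :: "('f, 'r) fm" where
  "C_fm = fm_of (FZ, RZ) graph_C [0..<r + m]"

lemma sat_C_fm: "sat (FZ, RZ) C_fm t \<longleftrightarrow> map t [0..<r] @ map t [r..<r + m] \<in> graph_C"
proof -
  have "def0 (FZ, RZ) (length [0..<r + m]) graph_C"
    using C_def unfolding graph_C_def by simp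
  from sat_fm_of[OF this] show ?thesis
    unfolding C_fm_def by (simp add: upt_add_eq_append[of 0 r m, simplified])
qed

definition le_fm :: "nat \<Rightarrow> nat \<Rightarrow> ('f, 'r) fm" where
  "le_fm a b = Or (Rel lessS [Var a, Var b]) (Eq (Var a) (Var b))"

text \<open>\<open>C\<^sub>d \<subseteq> [-c, c]\<^sup>r\<close> for some \<open>c\<close>, with \<open>c\<close> in variable \<open>r + m\<close> and \<open>-c\<close> in \<open>r + m + 1\<close>.\<close>

definition bounded_fm :: "('f, 'r) fm" where
  "bounded_fm = Exs [r + m, r + m + 1] (Conj (Eq (Fn plusS [Var (r + m + 1), Var (r + m)]) (Fn zeroS []))
     (Alls [0..<r] (Imp C_fm (Conjs (map (\<lambda>i. Conj (le_fm (r + m + 1) i) (le_fm i (r + m))) [0..<r])))))"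

lemma sat_bounded_fm:
  assumes d: "map t [r..<r + m] \<in> D"
  shows "sat (FZ, RZ) bounded_fm t"
proof -
  have "bounded_in (FZ, RZ) plusS zeroS lessS r (CF (map t [r..<r + m]))"
    using C_bdd d by blast
  then obtain c where c: "\<forall>xs\<in>CF (map t [r..<r + m]). \<forall>i<r.
      (RZ lessS [THE e. FZ plusS [e, c] = FZ zeroS [], xs ! i] \<or> (THE e. FZ plusS [e, c] = FZ zeroS []) = xs ! i)
      \<and> (RZ lessS [xs ! i, c] \<or> xs ! i = c)"
    unfolding bounded_in_def Let_def by auto
  define t' where "t' = t(r + m := c, r + m + 1 := THE e. FZ plusS [e, c] = FZ zeroS [])"
  have "sat (FZ, RZ) (Conj (le_fm (r + m + 1) i) (le_fm i (r + m))) t''"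
    if t'': "\<forall>v. v \<notin> set [0..<r] \<longrightarrow> t'' v = t' v" "sat (FZ, RZ) C_fm t''" and i: "i < r" for t'' i
  proof -
    have "map t'' [r..<r + m] = map t [r..<r + m]"
      using t''(1) unfolding t'_def by simp
    with t''(2) have "map t'' [0..<r] @ map t [r..<r + m] \<in> graph_C"
      unfolding sat_C_fm by metis
    then have "map t'' [0..<r] \<in> CF (map t [r..<r + m])"
      using append_in_graph_C[of "map t'' [0..<r]"] by simp
    from c[rule_format, OF this i] i show ?thesis
      using t''(1) unfolding le_fm_def t'_def by simp
  qed
  then have "sat (FZ, RZ) (Alls [0..<r] (Imp C_fm
      (Conjs (map (\<lambda>i. Conj (le_fm (r + m + 1) i) (le_fm i (r + m))) [0..<r])))) t'"
    unfolding sat_Alls by auto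
  moreover have "\<forall>v. v \<notin> set [r + m, r + m + 1] \<longrightarrow> t' v = t v"
    unfolding t'_def by simp
  moreover have "FZ plusS [t' (r + m + 1), t' (r + m)] = FZ zeroS []"
    using add_neg_Z[of c] unfolding t'_def by simp
  ultimately show ?thesis
    unfolding bounded_fm_def sat_Exs by (intro exI[of _ t']) simp
qed

lemma sat_C_fm_cong:
  assumes "\<forall>v<r + m. t v = t' v"
  shows "sat (FZ, RZ) C_fm t = sat (FZ, RZ) C_fm t'"
proof -
  have "map t [0..<r] = map t' [0..<r]" "map t [r..<r + m] = map t' [r..<r + m]"
    using assms by auto
  then show ?thesis
    unfolding sat_C_fm by (simp only:)
qed

lemma standard_fibre_int_bound:
  assumes d0: "map j d0 \<in> D"
  shows "\<exists>c0. \<forall>t. (\<forall>v. v \<notin> set [0..<r] \<longrightarrow> t v = param_asg 0 d0 v) \<longrightarrow> sat (FN, RN) C_fm t \<longrightarrow>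
    (\<forall>i\<in>set [0..<r]. t i \<in> {- c0..c0})"
proof -
  have len: "length d0 = m"
    using d0 D_dim by auto
  have "sat (FZ, RZ) bounded_fm (j \<circ> param_asg 0 d0)"
    using d0 by (intro sat_bounded_fm) (simp add: comp_param_asg[OF len] map_param_asg len)
  then have "sat (FN, RN) bounded_fm (param_asg 0 d0)"
    by (simp only: sat_int_iff)
  then obtain t1 where t1: "\<forall>v. v \<notin> set [r + m, r + m + 1] \<longrightarrow> t1 v = param_asg 0 d0 v"
    "t1 (r + m + 1) + t1 (r + m) = 0"
    "sat (FN, RN) (Alls [0..<r] (Imp C_fm (Conjs (map (\<lambda>i. Conj (le_fm (r + m + 1) i) (le_fm i (r + m))) [0..<r])))) t1"
    unfolding bounded_fm_def sat_Exs using std_plus std_zero by auto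
  have "t i \<in> {- t1 (r + m)..t1 (r + m)}"
    if t: "\<forall>v. v \<notin> set [0..<r] \<longrightarrow> t v = param_asg 0 d0 v" "sat (FN, RN) C_fm t" and i: "i < r" for t i
  proof -
    define t' where "t' = t(r + m := t1 (r + m), r + m + 1 := t1 (r + m + 1))"
    have "\<forall>v. v \<notin> set [0..<r] \<longrightarrow> t' v = t1 v"
      using t(1) t1(1) unfolding t'_def by auto
    moreover have "sat (FN, RN) C_fm t'"
      using t(2) sat_C_fm_cong[of "j \<circ> t" "j \<circ> t'"] unfolding sat_int_iff t'_def by simp
    ultimately have "sat (FN, RN) (Conj (le_fm (r + m + 1) i) (le_fm i (r + m))) t'"
      using t1(3) i unfolding sat_Alls by auto
    with t1(2) i show ?thesis
      using std_less unfolding le_fm_def t'_def by auto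
  qed
  then show ?thesis
    by (intro exI[of _ "t1 (r + m)"]) simp
qed

lemma finite_standard_fibre:
  assumes d0: "map j d0 \<in> D"
  shows "finite (CF (map j d0))"
proof -
  have len: "length d0 = m"
    using d0 D_dim by auto
  obtain c0 where c0: "\<And>t. \<forall>v. v \<notin> set [0..<r] \<longrightarrow> t v = param_asg 0 d0 v \<Longrightarrow> sat (FN, RN) C_fm t \<Longrightarrow>
      \<forall>i\<in>set [0..<r]. t i \<in> {- c0..c0}"
    using standard_fibre_int_bound[OF d0] by blast
  have "set c \<subseteq> j ` {- c0..c0}" if c: "c \<in> CF (map j d0)" for c
  proof
    fix a assume "a \<in> set c"
    moreover have lc: "length c = r"
      using c C_dim d0 by blast
    ultimately obtain i where i: "i < r" "a = c ! i"
      by (metis in_set_conv_nth)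
    define t where "t v = (if v < r then c ! v else j (param_asg 0 d0 v))" for v
    have "map t [0..<r] = c"
      by (rule nth_equalityI) (simp_all add: lc t_def)
    moreover have "map t [r..<r + m] = map j d0"
      by (rule nth_equalityI) (simp_all add: len t_def param_asg_def)
    ultimately have "sat (FZ, RZ) C_fm t"
      using c d0 append_in_graph_C[OF lc] unfolding sat_C_fm by simp
    then have "t i \<in> j ` {- c0..c0}"
      using elem_emb_finite_values[OF elem finite_atLeastAtMost_int c0, where t = t and i = i] i
      by (auto simp: t_def)
    then show "a \<in> j ` {- c0..c0}"
      using i unfolding t_def by simp
  qed
  then have "CF (map j d0) \<subseteq> {c. set c \<subseteq> j ` {- c0..c0} \<and> length c = r}"
    using C_dim d0 by blast
  then show ?thesis
    by (rule finite_subset) (simp add: finite_lists_length_eq)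
qed

definition admissible :: "'x set set \<Rightarrow> bool" where
  "admissible U \<longleftrightarrow> clopen_partition X U \<and> refines U U0"

text \<open>\<open>(x, c)\<close> is idempotent modulo \<open>U\<close>, expressed through the table \<open>m\<^sub>V\<^sub>,\<^sub>U\<close>; this
  depends only on the block of \<open>x\<close> in a common refinement of \<open>U0\<close> and \<open>V U\<close>.\<close>

definition idem_mod :: "'a list \<Rightarrow> 'x set set \<Rightarrow> 'x \<Rightarrow> 'a list \<Rightarrow> bool" where
  "idem_mod d U x c \<longleftrightarrow> (x, c, d) \<in> Y \<and>
     prod_table U (blk (V U) x, c, d) (blk (V U) x, c, d) = (blk U x, c, d)"

lemma admissible_U0: "admissible U0"
  unfolding admissible_def using clopen_partition_U0 refines_refl by blast

lemma idem_mod_iff_proj: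
  assumes U: "clopen_partition X U" and d: "d \<in> D" and y: "(x, c) \<in> fibre d"
  shows "idem_mod d U x c \<longleftrightarrow> proj U (mul d (x, c) (x, c)) = proj U (x, c)"
  using prod_table_proj[OF U d y y] y unfolding idem_mod_def proj_def fibre_def by auto

lemma idem_mod_idempotent:
  assumes "clopen_partition X U" "d \<in> D" "(x, c) \<in> fibre d" "mul d (x, c) (x, c) = (x, c)"
  shows "idem_mod d U x c"
  using idem_mod_iff_proj[OF assms(1-3)] assms(4) by simp

lemma idem_mod_refine:
  assumes d: "d \<in> D" and W: "clopen_partition X W" and U: "clopen_partition X U"
    and WU: "refines W U" and idem: "idem_mod d W x c"
  shows "idem_mod d U x c"
proof -
  have y: "(x, c) \<in> fibre d"
    using idem unfolding idem_mod_def fibre_def by simp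
  then have "fst (mul d (x, c) (x, c)) \<in> topspace X" "fst (x, c) \<in> topspace X"
    using fst_fibre mul_fibre[OF d] by blast+
  with idem show ?thesis
    using idem_mod_iff_proj[OF W d y] idem_mod_iff_proj[OF U d y] proj_refine[OF W U WU] by blast
qed

lemma idem_mod_blk_eq:
  assumes U: "clopen_partition X U" and W: "clopen_partition X W"
    and WV: "refines W (V U)" and WU0: "refines W U0"
    and x: "x \<in> topspace X" "x' \<in> topspace X" and eq: "blk W x = blk W x'"
  shows "idem_mod d U x c \<longleftrightarrow> idem_mod d U x' c"
proof -
  have WU: "refines W U"
    using WV refines_prod_partition[OF U] refines_trans by blast
  have "blk U x = blk U x'" "blk (V U) x = blk (V U) x'" "blk U0 x = blk U0 x'"
    using blk_refine_eq[OF W _ _ x eq] U WU WV clopen_partition_prod_partition[OF U]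
      clopen_partition_U0 WU0 by blast+
  with x show ?thesis
    unfolding idem_mod_def Y_iff by simp
qed

definition rep :: "'x set \<Rightarrow> 'x" where
  "rep R = (SOME x. x \<in> R)"

lemma idem_mod_rep:
  assumes U: "admissible U" and R: "R \<in> V U" and x: "x \<in> R"
  shows "idem_mod d U x c \<longleftrightarrow> idem_mod d U (rep R) c"
proof -
  have Uc: "clopen_partition X U"
    using U unfolding admissible_def by blast
  note V = clopen_partition_prod_partition[OF Uc]
  have "rep R \<in> R"
    unfolding rep_def using x by (rule someI)
  moreover have "refines (V U) U0"
    using U refines_prod_partition[OF Uc] refines_trans unfolding admissible_def by blast
  ultimately show ?thesis
    using idem_mod_blk_eq[OF Uc V refines_refl] x clopen_partition_subset_topspace[OF V R]
      blk_eq[OF V R] by blast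
qed

definition F0_fm :: "'x set \<Rightarrow> ('f, 'r) fm" where
  "F0_fm R0 = fm_of (FZ, RZ) {c @ d | c d. (R0, c, d) \<in> F0} [0..<r + m]"

definition table_fm :: "'x set set \<Rightarrow> 'x set \<Rightarrow> 'x set \<Rightarrow> ('f, 'r) fm" where
  "table_fm U R S = fm_of (FZ, RZ)
     {c @ c' @ d @ c'' @ d'' | c c' d c'' d''.
        d \<in> D \<and> c \<in> CF d \<and> c' \<in> CF d \<and> prod_table U (R, c, d) (R, c', d) = (S, c'', d'')}
     ([0..<r] @ [0..<r] @ [r..<r + m] @ [0..<r] @ [r..<r + m])"

definition idem_mod_fm :: "'x set set \<Rightarrow> 'x set \<Rightarrow> ('f, 'r) fm" where
  "idem_mod_fm U R = Conj (F0_fm (blk U0 (rep R))) (table_fm U R (blk U (rep R)))"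

lemma sat_F0_fm:
  assumes "R0 \<in> U0" "length c = r" "length d = m" "map t [0..<r] = c" "map t [r..<r + m] = d"
  shows "sat (FZ, RZ) (F0_fm R0) t \<longleftrightarrow> (R0, c, d) \<in> F0"
proof -
  have def: "def0 (FZ, RZ) (length [0..<r + m]) {c @ d | c d. (R0, c, d) \<in> F0}"
    using def0_F0[OF assms(1)] by simp
  have map: "map t [0..<r + m] = c @ d"
    using assms(4,5) by (simp add: upt_add_eq_append[of 0 r m, simplified])
  have "sat (FZ, RZ) (F0_fm R0) t \<longleftrightarrow> c @ d \<in> {c @ d | c d. (R0, c, d) \<in> F0}"
    unfolding F0_fm_def sat_fm_of[OF def] map ..
  also have "\<dots> \<longleftrightarrow> (R0, c, d) \<in> F0"
  proof
    assume "c @ d \<in> {c @ d | c d. (R0, c, d) \<in> F0}"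
    then obtain c' d' where cd: "c @ d = c' @ d'" "(R0, c', d') \<in> F0"
      by blast
    then have "length c' = r"
      using F0_subset C_dim by blast
    with cd assms(2) show "(R0, c, d) \<in> F0"
      by simp
  qed blast
  finally show ?thesis .
qed

lemma sat_table_fm:
  assumes U: "clopen_partition X U" and R: "R \<in> V U" and S: "S \<in> U"
    and len: "length c = r" "length d = m" and t: "map t [0..<r] = c" "map t [r..<r + m] = d"
  shows "sat (FZ, RZ) (table_fm U R S) t \<longleftrightarrow>
    d \<in> D \<and> c \<in> CF d \<and> prod_table U (R, c, d) (R, c, d) = (S, c, d)"
proof -
  let ?G = "{c @ c' @ d @ c'' @ d'' | c c' d c'' d''.
    d \<in> D \<and> c \<in> CF d \<and> c' \<in> CF d \<and> prod_table U (R, c, d) (R, c', d) = (S, c'', d'')}"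
  have def: "def0 (FZ, RZ) (length ([0..<r] @ [0..<r] @ [r..<r + m] @ [0..<r] @ [r..<r + m])) ?G"
    using def0_prod_table[OF U R R S] by (simp add: add.assoc)
  have map: "map t ([0..<r] @ [0..<r] @ [r..<r + m] @ [0..<r] @ [r..<r + m]) = c @ c @ d @ c @ d"
    using t by simp
  have "sat (FZ, RZ) (table_fm U R S) t \<longleftrightarrow> c @ c @ d @ c @ d \<in> ?G"
    unfolding table_fm_def sat_fm_of[OF def] map ..
  also have "\<dots> \<longleftrightarrow> d \<in> D \<and> c \<in> CF d \<and> prod_table U (R, c, d) (R, c, d) = (S, c, d)"
  proof
    assume "c @ c @ d @ c @ d \<in> ?G"
    then obtain c1 c2 d1 c3 d2 where G: "c @ c @ d @ c @ d = c1 @ c2 @ d1 @ c3 @ d2"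
      "d1 \<in> D" "c1 \<in> CF d1" "c2 \<in> CF d1" "prod_table U (R, c1, d1) (R, c2, d1) = (S, c3, d2)"
      by blast
    moreover have "d2 \<in> D" "c3 \<in> CF d2"
      using prod_table_range[OF U R R G(2-5)] by blast+
    ultimately have "length c1 = r" "length c2 = r" "length d1 = m" "length c3 = r"
      using C_dim D_dim by blast+
    with G(1) len have "c1 = c \<and> c2 = c \<and> d1 = d \<and> c3 = c \<and> d2 = d"
      by auto
    with G(2-5) show "d \<in> D \<and> c \<in> CF d \<and> prod_table U (R, c, d) (R, c, d) = (S, c, d)"
      by simp
  qed blast
  finally show ?thesis .
qed

lemma sat_idem_mod_fm:
  assumes U: "admissible U" and R: "R \<in> V U" and d: "d \<in> D" and t: "map t [r..<r + m] = d"
  shows "sat (FZ, RZ) (idem_mod_fm U R) t \<longleftrightarrow> idem_mod d U (rep R) (map t [0..<r])"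
proof -
  have Uc: "clopen_partition X U"
    using U unfolding admissible_def by blast
  note V = clopen_partition_prod_partition[OF Uc]
  have "rep R \<in> R"
    unfolding rep_def using clopen_partitionD(4)[OF V R] by (simp add: some_in_eq)
  then have top: "rep R \<in> topspace X" and blk_V: "blk (V U) (rep R) = R"
    using clopen_partition_subset_topspace[OF V R] blk_eq[OF V R] by blast+
  have len: "length (map t [0..<r]) = r" "length d = m"
    using d D_dim by auto
  show ?thesis
    unfolding idem_mod_fm_def sat.simps
      sat_F0_fm[OF blk_mem(1)[OF clopen_partition_U0 top] len refl t]
      sat_table_fm[OF Uc R blk_mem(1)[OF Uc top] len refl t]
    unfolding idem_mod_def Y_iff blk_V using top d by blast
qed

lemma sat_idem_mod_fm_blk:
  assumes U: "admissible U" and x: "x \<in> topspace X" and d: "d \<in> D" and t: "map t [r..<r + m] = d"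
  shows "sat (FZ, RZ) (idem_mod_fm U (blk (V U) x)) t \<longleftrightarrow> idem_mod d U x (map t [0..<r])"
proof -
  have V: "clopen_partition X (V U)"
    using U clopen_partition_prod_partition unfolding admissible_def by blast
  show ?thesis
    using sat_idem_mod_fm[OF U blk_mem(1)[OF V x] d t] idem_mod_rep[OF U blk_mem[OF V x]] by simp
qed

definition V_list :: "'x set set \<Rightarrow> 'x set list" where
  "V_list U = (SOME l. set l = V U)"

lemma set_V_list: "clopen_partition X U \<Longrightarrow> set (V_list U) = V U"
  unfolding V_list_def
  by (rule someI_ex) (use finite_list clopen_partitionD(1)[OF clopen_partition_prod_partition] in blast)

definition D_fm :: "('f, 'r) fm" where
  "D_fm = fm_of (FZ, RZ) D [r..<r + m]"

lemma sat_D_fm: "sat (FZ, RZ) D_fm t \<longleftrightarrow> map t [r..<r + m] \<in> D"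
  unfolding D_fm_def by (rule sat_fm_of) (use D_def in simp)

definition idem_mod_disj :: "'x set set \<Rightarrow> ('f, 'r) fm" where
  "idem_mod_disj U = Disj (map (\<lambda>R. Exs [0..<r] (idem_mod_fm U R)) (V_list U))"

lemma sat_idem_mod_disj:
  assumes U: "admissible U" and d: "d \<in> D" and t: "map t [r..<r + m] = d"
  shows "sat (FZ, RZ) (idem_mod_disj U) t \<longleftrightarrow> (\<exists>x c. idem_mod d U x c)"
proof
  have Uc: "clopen_partition X U"
    using U unfolding admissible_def by blast
  {
    assume "sat (FZ, RZ) (idem_mod_disj U) t"
    then obtain R t' where R: "R \<in> V U" "\<forall>v. v \<notin> set [0..<r] \<longrightarrow> t' v = t v"
      "sat (FZ, RZ) (idem_mod_fm U R) t'"
      unfolding idem_mod_disj_def using set_V_list[OF Uc] by (auto simp: sat_Exs)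
    moreover have "map t' [r..<r + m] = d"
      using R(2) t by auto
    ultimately show "\<exists>x c. idem_mod d U x c"
      using sat_idem_mod_fm[OF U R(1) d] by blast
  next
    assume "\<exists>x c. idem_mod d U x c"
    then obtain x c where idem: "idem_mod d U x c"
      by blast
    then have x: "x \<in> topspace X" and "length c = r"
      using C_dim d unfolding idem_mod_def Y_iff by auto
    define t' where "t' v = (if v < r then c ! v else t v)" for v
    have "map t' [0..<r] = c"
      by (rule nth_equalityI) (simp_all add: \<open>length c = r\<close> t'_def)
    moreover have "map t' [r..<r + m] = d"
      using t unfolding t'_def by auto
    ultimately have "sat (FZ, RZ) (idem_mod_fm U (blk (V U) x)) t'"
      using sat_idem_mod_fm_blk[OF U x d] idem by simp
    moreover have "blk (V U) x \<in> set (V_list U)"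
      using blk_mem(1)[OF clopen_partition_prod_partition[OF Uc] x] set_V_list[OF Uc] by simp
    moreover have "\<forall>v. v \<notin> set [0..<r] \<longrightarrow> t' v = t v"
      unfolding t'_def by simp
    ultimately show "sat (FZ, RZ) (idem_mod_disj U) t"
      unfolding idem_mod_disj_def by (auto simp: sat_Exs)
  }
qed

text \<open>The transfer step: at standard parameters the fibre is finite and has an idempotent,
  so the sentence saying that every fibre has an element idempotent modulo \<open>U\<close> holds in \<open>\<int>\<close>.\<close>

lemma idem_mod_solvable:
  assumes U: "admissible U" and d: "d \<in> D"
  shows "\<exists>x c. idem_mod d U x c"
proof -
  have Uc: "clopen_partition X U"
    using U unfolding admissible_def by blast
  have "sat (FN, RN) (Alls [r..<r + m] (Imp D_fm (idem_mod_disj U))) (\<lambda>_. 0)"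
    unfolding sat_Alls
  proof (intro allI impI)
    fix t :: "nat \<Rightarrow> int"
    have "\<exists>x c. idem_mod (map j (map t [r..<r + m])) U x c" if d0: "map j (map t [r..<r + m]) \<in> D"
    proof -
      obtain e where "e \<in> fibre (map j (map t [r..<r + m]))" "mul (map j (map t [r..<r + m])) e e = e"
        using idempotent_finite_fibre[OF d0 finite_standard_fibre[OF d0]] by blast
      then show ?thesis
        using idem_mod_idempotent[OF Uc d0, of "fst e" "snd e"] by auto
    qed
    then show "sat (FN, RN) (Imp D_fm (idem_mod_disj U)) t"
      unfolding sat_int_iff using sat_idem_mod_disj[OF U] by (simp add: sat_D_fm)
  qed
  then have "sat (FZ, RZ) (Alls [r..<r + m] (Imp D_fm (idem_mod_disj U))) (j \<circ> (\<lambda>_. 0))"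
    unfolding sat_int_iff .
  moreover have len: "length d = m"
    using d D_dim by auto
  moreover have "\<forall>v. v \<notin> set [r..<r + m] \<longrightarrow> param_asg (j 0) d v = (j \<circ> (\<lambda>_. 0)) v"
    unfolding param_asg_def by simp
  ultimately have "sat (FZ, RZ) (Imp D_fm (idem_mod_disj U)) (param_asg (j 0) d)"
    unfolding sat_Alls by blast
  then show ?thesis
    using sat_idem_mod_disj[OF U d] d by (simp add: sat_D_fm map_param_asg[OF len])
qed

definition idem_mod_points :: "'a list \<Rightarrow> 'x set set set \<Rightarrow> 'x set" where
  "idem_mod_points d \<UU> = {x \<in> topspace X. \<exists>c. \<forall>U\<in>\<UU>. idem_mod d U x c}"

lemma admissible_refinement:
  assumes d: "d \<in> D" and "finite \<UU>" "\<forall>U\<in>\<UU>. clopen_partition X U"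
  obtains W where "admissible W" "\<forall>U\<in>\<UU>. refines W U"
proof -
  obtain W where "clopen_partition X W" "\<forall>U\<in>insert U0 \<UU>. refines W U"
    using common_refinement[of "insert U0 \<UU>" X] assms clopen_partition_U0 topspace_nonempty[OF d] by blast
  then show ?thesis
    using that unfolding admissible_def by blast
qed

lemma idem_mod_points_nonempty:
  assumes d: "d \<in> D" and fin: "finite \<UU>" and adm: "\<forall>U\<in>\<UU>. admissible U"
  shows "idem_mod_points d \<UU> \<noteq> {}"
proof -
  obtain W where W: "admissible W" "\<forall>U\<in>\<UU>. refines W U"
    using admissible_refinement[OF d fin] adm unfolding admissible_def by blast
  obtain x c where idem: "idem_mod d W x c"
    using idem_mod_solvable[OF W(1) d] by blast
  then have "\<forall>U\<in>\<UU>. idem_mod d U x c"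
    using idem_mod_refine[OF d] W adm unfolding admissible_def by blast
  moreover have "x \<in> topspace X"
    using idem unfolding idem_mod_def Y_iff by simp
  ultimately show ?thesis
    unfolding idem_mod_points_def by blast
qed

lemma closedin_idem_mod_points:
  assumes d: "d \<in> D" and fin: "finite \<UU>" and adm: "\<forall>U\<in>\<UU>. admissible U"
  shows "closedin X (idem_mod_points d \<UU>)"
proof -
  have cl: "\<forall>U\<in>\<UU>. clopen_partition X U"
    using adm unfolding admissible_def by blast
  obtain W where W: "admissible W" "\<forall>U\<in>\<UU> \<union> V ` \<UU>. refines W U"
    using admissible_refinement[OF d, of "\<UU> \<union> V ` \<UU>"] fin cl clopen_partition_prod_partition by blast
  have Wc: "clopen_partition X W" and WU0: "refines W U0"
    using W(1) unfolding admissible_def by blast+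
  have "idem_mod_points d \<UU> = \<Union>{R \<in> W. R \<inter> idem_mod_points d \<UU> \<noteq> {}}"
  proof
    show "idem_mod_points d \<UU> \<subseteq> \<Union>{R \<in> W. R \<inter> idem_mod_points d \<UU> \<noteq> {}}"
      using blk_mem[OF Wc] unfolding idem_mod_points_def by blast
    show "\<Union>{R \<in> W. R \<inter> idem_mod_points d \<UU> \<noteq> {}} \<subseteq> idem_mod_points d \<UU>"
    proof
      fix x' assume "x' \<in> \<Union>{R \<in> W. R \<inter> idem_mod_points d \<UU> \<noteq> {}}"
      then obtain R x where R: "R \<in> W" "x' \<in> R" "x \<in> R" and x: "x \<in> idem_mod_points d \<UU>"
        by blast
      then have top: "x \<in> topspace X" "x' \<in> topspace X"
        using clopen_partition_subset_topspace[OF Wc R(1)] by blast+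
      have eq: "blk W x = blk W x'"
        using blk_eq[OF Wc R(1)] R(2,3) by simp
      obtain c where "\<forall>U\<in>\<UU>. idem_mod d U x c"
        using x unfolding idem_mod_points_def by blast
      then have "\<forall>U\<in>\<UU>. idem_mod d U x' c"
        using idem_mod_blk_eq[OF _ Wc _ WU0 top eq] cl W(2) by blast
      with top show "x' \<in> idem_mod_points d \<UU>"
        unfolding idem_mod_points_def by blast
    qed
  qed
  moreover have "closedin X (\<Union>{R \<in> W. R \<inter> idem_mod_points d \<UU> \<noteq> {}})"
    using clopen_partitionD(1,3)[OF Wc] by (intro closedin_Union) auto
  ultimately show ?thesis
    by simp
qed

lemma idem_mod_points_antimono: "\<UU>' \<subseteq> \<UU> \<Longrightarrow> idem_mod_points d \<UU> \<subseteq> idem_mod_points d \<UU>'"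
  unfolding idem_mod_points_def by blast

lemma idem_mod_common_point:
  assumes d: "d \<in> D"
  obtains x where "\<And>\<UU>. finite \<UU> \<Longrightarrow> \<forall>U\<in>\<UU>. admissible U \<Longrightarrow> x \<in> idem_mod_points d \<UU>"
proof -
  define \<A> where "\<A> = {\<UU>. finite \<UU> \<and> (\<forall>U\<in>\<UU>. admissible U)}"
  have "\<forall>\<F>. finite \<F> \<and> \<F> \<subseteq> idem_mod_points d ` \<A> \<longrightarrow> \<Inter>\<F> \<noteq> {}"
  proof (intro allI impI, elim conjE)
    fix \<F> assume \<F>: "finite \<F>" "\<F> \<subseteq> idem_mod_points d ` \<A>"
    obtain \<C> where \<C>: "\<C> \<subseteq> \<A>" "finite \<C>" "\<F> = idem_mod_points d ` \<C>"
      using finite_subset_image[OF \<F>] by blast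
    then have "finite (\<Union>\<C>)" "\<forall>U\<in>\<Union>\<C>. admissible U"
      unfolding \<A>_def by auto
    then have "idem_mod_points d (\<Union>\<C>) \<noteq> {}"
      by (rule idem_mod_points_nonempty[OF d])
    moreover have "idem_mod_points d (\<Union>\<C>) \<subseteq> \<Inter>\<F>"
      unfolding \<C>(3) using idem_mod_points_antimono[OF Union_upper] by blast
    ultimately show "\<Inter>\<F> \<noteq> {}"
      by blast
  qed
  moreover have "\<forall>C\<in>idem_mod_points d ` \<A>. closedin X C"
    using closedin_idem_mod_points[OF d] unfolding \<A>_def by blast
  moreover have "compact_space X"
    using prof unfolding profinite_space_def by blast
  ultimately obtain x where x: "x \<in> \<Inter>(idem_mod_points d ` \<A>)"
    unfolding compact_space_fip by (meson ex_in_conv)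
  show ?thesis
    by (rule that) (use x in \<open>auto simp: \<A>_def\<close>)
qed

text \<open>Saturation supplies a single \<open>c\<close> that works for a point \<open>x\<close> idempotent modulo every
  finite family of partitions: the relevant type has the parameters \<open>d\<close> only.\<close>

lemma idem_mod_fm_finitely_satisfiable:
  assumes d: "d \<in> D"
    and x: "\<And>\<UU>. finite \<UU> \<Longrightarrow> \<forall>U\<in>\<UU>. admissible U \<Longrightarrow> x \<in> idem_mod_points d \<UU>"
    and F: "finite F" "F \<subseteq> {idem_mod_fm U (blk (V U) x) | U. admissible U}"
  shows "\<exists>t. (\<forall>v. v \<notin> set [0..<r] \<longrightarrow> t v = param_asg (j 0) d v) \<and> (\<forall>\<phi>\<in>F. sat (FZ, RZ) \<phi> t)"
proof -
  obtain \<UU> where \<UU>: "finite \<UU>" "\<forall>U\<in>\<UU>. admissible U" "F = (\<lambda>U. idem_mod_fm U (blk (V U) x)) ` \<UU>"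
    using finite_subset_image[OF F(1), of "\<lambda>U. idem_mod_fm U (blk (V U) x)" "Collect admissible"] F(2)
    by (auto simp: setcompr_eq_image)
  then obtain c where c: "\<forall>U\<in>\<UU>. idem_mod d U x c" and top: "x \<in> topspace X"
    using x unfolding idem_mod_points_def by blast
  define t where "t v = (if v < r then c ! v else param_asg (j 0) d v)" for v
  have "map t [0..<r] = c" if "U \<in> \<UU>" for U
    using c that C_dim d unfolding idem_mod_def Y_iff
    by (intro nth_equalityI) (auto simp: t_def)
  moreover have "map t [r..<r + m] = d"
  proof -
    have "map t [r..<r + m] = map (param_asg (j 0) d) [r..<r + m]"
      unfolding t_def by simp
    also have "\<dots> = d"
      using d D_dim by (intro map_param_asg) auto
    finally show ?thesis .
  qed
  ultimately have "\<forall>\<phi>\<in>F. sat (FZ, RZ) \<phi> t"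
    using sat_idem_mod_fm_blk[OF _ top d] \<UU>(2,3) c by auto
  moreover have "\<forall>v. v \<notin> set [0..<r] \<longrightarrow> t v = param_asg (j 0) d v"
    by (simp add: t_def)
  ultimately show ?thesis
    by blast
qed

lemma idem_mod_all:
  assumes d: "d \<in> D"
  obtains x c where "\<And>U. admissible U \<Longrightarrow> idem_mod d U x c"
proof -
  obtain x where x: "\<And>\<UU>. finite \<UU> \<Longrightarrow> \<forall>U\<in>\<UU>. admissible U \<Longrightarrow> x \<in> idem_mod_points d \<UU>"
    using idem_mod_common_point[OF d] by blast
  then have top: "x \<in> topspace X"
    unfolding idem_mod_points_def by blast
  have len: "length d = m"
    using d D_dim by auto
  have "infinite ((UNIV :: 'f set) <+> (UNIV :: 'r set) <+> (UNIV :: nat set) <+> {R. openin X R \<and> closedin X R})"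
    using finite_imageD[of "\<lambda>n. Inr (Inr (Inl n))" "UNIV :: nat set"] by (auto intro: infinite_super)
  moreover have "finite (range (param_asg (j 0) d))"
    by (rule finite_subset[of _ "insert (j 0) (set d)"]) (auto simp: param_asg_def len)
  ultimately obtain t where t: "\<forall>v. v \<notin> set [0..<r] \<longrightarrow> t v = param_asg (j 0) d v"
    "\<forall>\<phi>\<in>{idem_mod_fm U (blk (V U) x) | U. admissible U}. sat (FZ, RZ) \<phi> t"
    using saturated_realise[OF sat _ _ idem_mod_fm_finitely_satisfiable[OF d x]] by blast
  have "map t [r..<r + m] = map (param_asg (j 0) d) [r..<r + m]"
    using t(1) by simp
  also have "\<dots> = d"
    by (rule map_param_asg[OF len])
  finally have "map t [r..<r + m] = d" .
  with t(2) have "idem_mod d U x (map t [0..<r])" if "admissible U" for U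
    using sat_idem_mod_fm_blk[OF that top d] that by blast
  then show ?thesis
    using that by blast
qed

lemma idempotent_of_idem_mod_all:
  assumes d: "d \<in> D" and idem: "\<And>U. admissible U \<Longrightarrow> idem_mod d U x c"
  shows "(x, c) \<in> fibre d" "mul d (x, c) (x, c) = (x, c)"
proof -
  show y: "(x, c) \<in> fibre d"
    using idem[OF admissible_U0] unfolding idem_mod_def fibre_def by simp
  show "mul d (x, c) (x, c) = (x, c)"
  proof (rule ccontr)
    assume "mul d (x, c) (x, c) \<noteq> (x, c)"
    then obtain U where U: "clopen_partition X U" "proj U (mul d (x, c) (x, c)) \<noteq> proj U (x, c)"
      using fibre_separating_partition[OF mul_fibre[OF d y y] y] by blast
    obtain W where W: "admissible W" "refines W U"
      using admissible_refinement[OF d, of "{U}"] U(1) by blast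
    have Wc: "clopen_partition X W"
      using W(1) unfolding admissible_def by blast
    have "proj W (mul d (x, c) (x, c)) = proj W (x, c)"
      using idem[OF W(1)] idem_mod_iff_proj[OF Wc d y] by blast
    then have "proj U (mul d (x, c) (x, c)) = proj U (x, c)"
      using proj_refine[OF Wc U(1) W(2)] fst_fibre mul_fibre[OF d y y] y by blast
    with U(2) show False ..
  qed
qed

lemma fibre_idempotent:
  assumes d: "d \<in> D"
  shows "\<exists>e\<in>fibre d. mul d e e = e"
  using idem_mod_all[OF d] idempotent_of_idem_mod_all[OF d] by metis

end

theorem mainTheorem5:
  fixes FZ :: "'f \<Rightarrow> 'a list \<Rightarrow> 'a" and RZ :: "'r \<Rightarrow> 'a list \<Rightarrow> bool"
    and FN :: "'f \<Rightarrow> int list \<Rightarrow> int" and RN :: "'r \<Rightarrow> int list \<Rightarrow> bool"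
    and plusS zeroS :: 'f and lessS :: 'r
    and j :: "int \<Rightarrow> 'a"
    and X :: "'x topology"
    and m r :: nat
    and D :: "'a list set"
    and CF :: "'a list \<Rightarrow> 'a list set"
    and Y :: "('x \<times> 'a list \<times> 'a list) set"
    and mul :: "'a list \<Rightarrow> ('x \<times> 'a list) \<Rightarrow> ('x \<times> 'a list) \<Rightarrow> ('x \<times> 'a list)"
  assumes std_plus: "\<forall>a b. FN plusS [a, b] = a + b"
    and std_zero: "FN zeroS [] = 0"
    and std_less: "\<forall>a b. RN lessS [a, b] \<longleftrightarrow> a < b"
    and elem: "elem_emb (FN, RN) (FZ, RZ) j"
    and sat: "saturated_for (FZ, RZ)
               ((UNIV :: 'f set) <+> (UNIV :: 'r set) <+> (UNIV :: nat set)
                 <+> {R. openin X R \<and> closedin X R})"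
    and prof: "profinite_space X"
    and D_dim: "D \<subseteq> {d. length d = m}"
    and D_def: "def0 (FZ, RZ) m D"
    and C_dim: "\<forall>d\<in>D. CF d \<subseteq> {c. length c = r}"
    and C_bdd: "\<forall>d\<in>D. bounded_in (FZ, RZ) plusS zeroS lessS r (CF d)"
    and C_def: "def0 (FZ, RZ) (r + m) {c @ d | c d. d \<in> D \<and> c \<in> CF d}"
    and Y_sub: "Y \<subseteq> {(x, c, d). x \<in> topspace X \<and> d \<in> D \<and> c \<in> CF d}"
    and Y_nonempty: "\<forall>d\<in>D. {(x, c). (x, c, d) \<in> Y} \<noteq> {}"
    and Y_closed: "\<forall>d\<in>D. \<forall>y\<in>{(x, c). (x, c, d) \<in> Y}. \<forall>y'\<in>{(x, c). (x, c, d) \<in> Y}.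
                     mul d y y' \<in> {(x, c). (x, c, d) \<in> Y}"
    and Y_assoc: "\<forall>d\<in>D. \<forall>y\<in>{(x, c). (x, c, d) \<in> Y}. \<forall>y'\<in>{(x, c). (x, c, d) \<in> Y}.
                     \<forall>y''\<in>{(x, c). (x, c, d) \<in> Y}. mul d (mul d y y') y'' = mul d y (mul d y' y'')"
    and Y_reldef: "\<exists>U0 F0. clopen_partition X U0
                     \<and> F0 \<subseteq> {(R, c, d). R \<in> U0 \<and> d \<in> D \<and> c \<in> CF d}
                     \<and> (\<forall>R\<in>U0. def0 (FZ, RZ) (r + m) {c @ d | c d. (R, c, d) \<in> F0})
                     \<and> Y = {(x, c, d). x \<in> topspace X \<and> d \<in> D \<and> c \<in> CF d \<and> (blk U0 x, c, d) \<in> F0}"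
    and prod_prodef: "\<forall>U. clopen_partition X U \<longrightarrow>
       (\<exists>V (mm :: ('x set \<times> 'a list \<times> 'a list) \<Rightarrow> ('x set \<times> 'a list \<times> 'a list)
                    \<Rightarrow> ('x set \<times> 'a list \<times> 'a list)).
          clopen_partition X V \<and> refines V U
        \<and> (\<forall>R\<in>V. \<forall>R'\<in>V. \<forall>d\<in>D. \<forall>c\<in>CF d. \<forall>c'\<in>CF d.
              (case mm (R, c, d) (R', c', d) of (S, c'', d'') \<Rightarrow> S \<in> U \<and> d'' \<in> D \<and> c'' \<in> CF d''))
        \<and> (\<forall>R\<in>V. \<forall>R'\<in>V. \<forall>S\<in>U. def0 (FZ, RZ) (r + r + m + r + m)
              {c @ c' @ d @ c'' @ d'' | c c' d c'' d''.
                 d \<in> D \<and> c \<in> CF d \<and> c' \<in> CF d \<and> mm (R, c, d) (R', c', d) = (S, c'', d'')})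
        \<and> (\<forall>d\<in>D. \<forall>x c x' c'. (x, c, d) \<in> Y \<and> (x', c', d) \<in> Y \<longrightarrow>
              (case mul d (x, c) (x', c') of (x'', c'') \<Rightarrow> (blk U x'', c'', d))
                = mm (blk V x, c, d) (blk V x', c', d)))"
  shows "\<forall>d\<in>D. \<exists>e\<in>{(x, c). (x, c, d) \<in> Y}. mul d e e = e"
proof -
  interpret definable_semigroup_family FZ RZ FN RN plusS zeroS lessS j X m r D CF Y mul
    by (intro definable_semigroup_family.intro) (fact assms)+
  show ?thesis
    using fibre_idempotent unfolding fibre_def by blast
qed

end
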